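(* In the setting described in the context, for all sufficiently small $\epsilon>0$ the system (P1)–(P2) has a unique solution, and its first component $w_{\epsilon2,1}(0)=(B_\epsilon R_{\epsilon1}-R_{\epsilon2})/\Delta_\epsilon$ satisfies \[\lim_{\epsilon\to0}w_{\epsilon2,1}(0)=w_{2,1}(0):=\frac{f_{2,1}\langle\Psi_1+\Psi_2,\rho\rangle-2g_{1,1}\langle\widetilde\rho,w_{2,0}\rangle-(g_{2,0}+2\overline g_{1,1})\langle\widetilde\rho,w_{1,1}\rangle-\overline g_{0,2}\langle\widetilde\rho,w_{0,2}\rangle}{2r\omega i-2rA+2},\] where $\rho(s)=-2se^{\omega is}$, $s\in[-r,0]$, and $\widetilde\rho(\zeta)=-2\zeta e^{-\omega i\zeta}$, $\zeta\in[0,r]$.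
   Context: Unperturbed problem. Let $r>0$, $A,B\in\mathbb{R}$, and consider $\dot x(t)=Ax(t)+Bx(t-r)+\hat f(x(t),x(t-r))$, where $\hat f(y,z)=\sum_{j,k\geq0,\,j+k\geq2}\frac{1}{j!k!}C_{j,k}y^jz^k$ is a real $C^\infty$ function near $(0,0)$. Assume $\lambda-A-Be^{-\lambda r}=0$ has roots $\pm\omega i$, $\omega>0$, and all other roots have negative real part. Let $\mathcal{B}_C=C([-r,0],\mathbb{C})$, $\varphi_1(s)=e^{\omega is}$, $\varphi_2=\overline\varphi_1$, $\mathcal M=\mathrm{span}\{\varphi_1,\varphi_2\}$; for $\psi\in C([0,r],\mathbb C)$, $\varphi\in\mathcal B_C$ let $\langle\psi,\varphi\rangle=\psi(0)\varphi(0)+B\int_{-r}^0\psi(\zeta+r)\varphi(\zeta)d\zeta$; $\psi_1(\zeta)=e^{-\omega i\zeta}$, $\Psi_1=\frac{1-(A+i\omega)r}{(1-Ar)^2+\omega^2r^2}\psi_1$, $\Psi_2=\overline\Psi_1$, $\mathcal N=\{\varphi:\langle\Psi_1,\varphi\rangle=\langle\Psi_2,\varphi\rangle=0\}$. The local center manifold at $0$ is the graph of a map from a neighborhood of $0$ in $\mathcal M$ to $\mathcal N$, written $w(z,\overline z)=\sum_{i+j\geq2}\frac1{i!j!}w_{i,j}z^i\overline z^j$ (value at $z\varphi_1+\overline z\varphi_2$), $w_{i,j}\in\mathcal B_C$. Define $f_{i,j}$ by $\hat f(\Phi(0),\Phi(-r))=\sum\frac1{i!j!}f_{i,j}u^i\overline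 u^j$ with $\Phi=u\varphi_1+\overline u\varphi_2+w(u,\overline u)$, and $g_{i,j}=\Psi_1(0)f_{i,j}$. (The equations for $w_{2,1}(0),w_{2,1}(-r)$ obtained from invariance of the center manifold are dependent, so $w_{2,1}(0)$ is defined via the perturbation below.) Perturbed problem. Let $A_\epsilon,B_\epsilon\in\mathbb R$ depend smoothly on $\epsilon>0$ with $A_\epsilon\to A$, $B_\epsilon\to B$ as $\epsilon\searrow0$, chosen so that for all sufficiently small $\epsilon>0$ the equation $\lambda-A_\epsilon-B_\epsilon e^{-\lambda r}=0$ has roots $\lambda_\epsilon=\mu_\epsilon+\omega_\epsilon i$ and $\overline\lambda_\epsilon$ with $\mu_\epsilon>0$, and all other roots have negative real part (then $\mu_\epsilon\to0$, $\omega_\epsilon\to\omega$). Consider $\dot x(t)=A_\epsilon x(t)+B_\epsilon x(t-r)+\hat f(x(t),x(t-r))$. Let $\varphi_{\epsilon1}(s)=e^{\lambda_\epsilon s}$, $\varphi_{\epsilon2}=\overline\varphi_{\epsilon1}$, $\mathcal M_\epsilon$ their span; $\langle\psi,\varphi\rangle_\epsilon=\psi(0)\varphi(0)+B_\epsilon\int_{-r}^0\psi(\zeta+r)\varphi(\zeta)d\zeta$; $\psi_{\epsilon1}(\zeta)=e^{-\lambda_\epsilon\zeta}$, $\Psi_{\epsilon1}=\frac{1+(\overline\lambda_\epsilon-A_\epsilon)r}{(1-A_\epsilon r+\mu_\epsilon r)^2+\omega_\epsilon^2r^2}\psi_{\epsilon1}$, $\Psi_{\epsilon2}=\overline\Psi_{\epsilon1}$,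 $\mathcal N_\epsilon=\{\varphi:\langle\Psi_{\epsilon1},\varphi\rangle_\epsilon=\langle\Psi_{\epsilon2},\varphi\rangle_\epsilon=0\}$. The local unstable manifold at $0$ is the graph of a map from a neighborhood of $0$ in $\mathcal M_\epsilon$ to $\mathcal N_\epsilon$, written $w_\epsilon(v,\overline v)=\sum_{i+j\geq2}\frac1{i!j!}w_{\epsilon i,j}v^i\overline v^j$ (value at $v\varphi_{\epsilon1}+\overline v\varphi_{\epsilon2}$). Define $f_{\epsilon i,j}$ by $\hat f(\Phi_\epsilon(0),\Phi_\epsilon(-r))=\sum\frac1{i!j!}f_{\epsilon i,j}v^i\overline v^j$ with $\Phi_\epsilon=v\varphi_{\epsilon1}+\overline v\varphi_{\epsilon2}+w_\epsilon(v,\overline v)$, and $g_{\epsilon i,j}=\Psi_{\epsilon1}(0)f_{\epsilon i,j}$. Let $\kappa_\epsilon=2\lambda_\epsilon+\overline\lambda_\epsilon$ and $\Delta_\epsilon=-B_\epsilon e^{-\kappa_\epsilon r}-A_\epsilon+\kappa_\epsilon$. The system (P1)–(P2) for $X=w_{\epsilon2,1}(0)$, $Y=w_{\epsilon2,1}(-r)$ is $-e^{-\kappa_\epsilon r}X+Y=R_{\epsilon1}$, $(A_\epsilon-\kappa_\epsilon)X+B_\epsilon Y=R_{\epsilon2}$ with $R_{\epsilon1}=\frac{-1}{\lambda_\epsilon+\overline\lambda_\epsilon}g_{\epsilon2,1}(e^{-\lambda_\epsilon r}-e^{-\kappa_\epsilon r})-\frac1{2\lambda_\epsilon}\overline g_{\epsilon1,2}(e^{-\overline\lambda_\epsilon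 r}-e^{-\kappa_\epsilon r})-2g_{\epsilon1,1}e^{-\kappa_\epsilon r}\int_{-r}^0w_{\epsilon2,0}(\theta)e^{-\kappa_\epsilon\theta}d\theta-(g_{\epsilon2,0}+2\overline g_{\epsilon1,1})e^{-\kappa_\epsilon r}\int_{-r}^0w_{\epsilon1,1}(\theta)e^{-\kappa_\epsilon\theta}d\theta-\overline g_{\epsilon0,2}e^{-\kappa_\epsilon r}\int_{-r}^0w_{\epsilon0,2}(\theta)e^{-\kappa_\epsilon\theta}d\theta$ and $R_{\epsilon2}=g_{\epsilon2,1}+\overline g_{\epsilon1,2}-f_{\epsilon2,1}+2g_{\epsilon1,1}w_{\epsilon2,0}(0)+(g_{\epsilon2,0}+2\overline g_{\epsilon1,1})w_{\epsilon1,1}(0)+\overline g_{\epsilon0,2}w_{\epsilon0,2}(0)$. *)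

theory Defs
  imports "HOL-Analysis.Analysis"
begin

definition charfun :: "real \<Rightarrow> real \<Rightarrow> real \<Rightarrow> complex \<Rightarrow> complex" where
  "charfun A B r z = z - of_real A - of_real B * exp (- z * of_real r)"

text \<open>Normalisation constant Psi(0) of the adjoint eigenfunction for the root lam
  (lam = i omega gives Psi_1(0), lam = lambda_eps gives Psi_{eps1}(0)).\<close>
definition Psi0 :: "real \<Rightarrow> real \<Rightarrow> complex \<Rightarrow> complex" where
  "Psi0 A r lam = (1 + (cnj lam - of_real A) * of_real r) /
      of_real ((1 - A * r + Re lam * r)\<^sup>2 + (Im lam)\<^sup>2 * r\<^sup>2)"

definition pairing :: "real \<Rightarrow> real \<Rightarrow> (real \<Rightarrow> complex) \<Rightarrow> (real \<Rightarrow> complex) \<Rightarrow> complex" where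
  "pairing B r psi phi = psi 0 * phi 0 + of_real B * integral {-r..0} (\<lambda>\<zeta>. psi (\<zeta> + r) * phi \<zeta>)"

text \<open>Taylor polynomial of order 3 of fhat (the only part affecting coefficients of
  total order <= 3): sum over 2 <= j+k <= 3 of C_{j,k} y^j z^k / (j! k!).\<close>
definition fhat3 :: "(nat \<Rightarrow> nat \<Rightarrow> real) \<Rightarrow> complex \<Rightarrow> complex \<Rightarrow> complex" where
  "fhat3 C y z = (\<Sum>j\<le>3. \<Sum>k\<le>3. if 2 \<le> j + k \<and> j + k \<le> 3
      then of_real (C j k) / of_nat (fact j * fact k) * y ^ j * z ^ k else 0)"

text \<open>Coefficient F_{i,j} of a series F(u,v) = sum F_{i,j} u^i v^j/(i! j!).\<close>
definition taylor_coeff :: "(complex \<Rightarrow> complex \<Rightarrow> complex) \<Rightarrow> nat \<Rightarrow> nat \<Rightarrow> complex" where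
  "taylor_coeff F i j = (deriv ^^ i) (\<lambda>u. (deriv ^^ j) (\<lambda>v. F u v) 0) 0"

text \<open>f_{i,j} (i+j <= 3): coefficients of fhat(Phi(0), Phi(-r)) with
  Phi = u phi_1 + v phi_2 + w, phi_1(s) = e^{lam s}, phi_2 = conj phi_1, where only the
  second-order part of w (w20,w11,w02) influences coefficients of order <= 3.\<close>
definition fcoef :: "(nat \<Rightarrow> nat \<Rightarrow> real) \<Rightarrow> real \<Rightarrow> complex \<Rightarrow>
    (real \<Rightarrow> complex) \<Rightarrow> (real \<Rightarrow> complex) \<Rightarrow> (real \<Rightarrow> complex) \<Rightarrow> nat \<Rightarrow> nat \<Rightarrow> complex" where
  "fcoef C r lam w20 w11 w02 i j = taylor_coeff (\<lambda>u v. fhat3 C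
      (u + v + w20 0 * u\<^sup>2 / 2 + w11 0 * u * v + w02 0 * v\<^sup>2 / 2)
      (u * exp (- lam * of_real r) + v * exp (- cnj lam * of_real r)
        + w20 (-r) * u\<^sup>2 / 2 + w11 (-r) * u * v + w02 (-r) * v\<^sup>2 / 2)) i j"

definition gcoef :: "real \<Rightarrow> (nat \<Rightarrow> nat \<Rightarrow> real) \<Rightarrow> real \<Rightarrow> complex \<Rightarrow>
    (real \<Rightarrow> complex) \<Rightarrow> (real \<Rightarrow> complex) \<Rightarrow> (real \<Rightarrow> complex) \<Rightarrow> nat \<Rightarrow> nat \<Rightarrow> complex" where
  "gcoef A C r lam w20 w11 w02 i j = Psi0 A r lam * fcoef C r lam w20 w11 w02 i j"

text \<open>Second-order invariance equations for w_{i,j} (i+j = 2) of the invariant manifold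
  tangent to span{e^{lam s}, e^{conj lam s}}:
  on [-r,0]:  w' = (i lam + j conj lam) w + g_{i,j} phi_1 + conj(g_{j,i}) phi_2,
  at 0:       (i lam + j conj lam) w(0) + g_{i,j} + conj(g_{j,i}) = A w(0) + B w(-r) + f_{i,j}.\<close>
definition inv_eq :: "real \<Rightarrow> real \<Rightarrow> real \<Rightarrow> complex \<Rightarrow> nat \<Rightarrow> nat \<Rightarrow> (real \<Rightarrow> complex)
    \<Rightarrow> complex \<Rightarrow> complex \<Rightarrow> complex \<Rightarrow> bool" where
  "inv_eq A B r lam i j w f g gb \<longleftrightarrow>
     (\<forall>\<theta>\<in>{-r..0}. (w has_vector_derivative
        ((of_nat i * lam + of_nat j * cnj lam) * w \<theta> + g * exp (lam * of_real \<theta>)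
           + gb * exp (cnj lam * of_real \<theta>))) (at \<theta> within {-r..0}))
     \<and> (of_nat i * lam + of_nat j * cnj lam) * w 0 + g + gb
         = of_real A * w 0 + of_real B * w (-r) + f"

definition second_order :: "real \<Rightarrow> real \<Rightarrow> real \<Rightarrow> complex \<Rightarrow> (nat \<Rightarrow> nat \<Rightarrow> real) \<Rightarrow>
    (real \<Rightarrow> complex) \<Rightarrow> (real \<Rightarrow> complex) \<Rightarrow> (real \<Rightarrow> complex) \<Rightarrow> bool" where
  "second_order A B r lam C w20 w11 w02 \<longleftrightarrow>
     (let f = fcoef C r lam w20 w11 w02; g = gcoef A C r lam w20 w11 w02 in
       inv_eq A B r lam 2 0 w20 (f 2 0) (g 2 0) (cnj (g 0 2))
     \<and> inv_eq A B r lam 1 1 w11 (f 1 1) (g 1 1) (cnj (g 1 1))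
     \<and> inv_eq A B r lam 0 2 w02 (f 0 2) (g 0 2) (cnj (g 2 0)))"

definition kappa :: "complex \<Rightarrow> complex" where
  "kappa lam = 2 * lam + cnj lam"

definition Delta :: "real \<Rightarrow> real \<Rightarrow> real \<Rightarrow> complex \<Rightarrow> complex" where
  "Delta A B r lam = - of_real B * exp (- kappa lam * of_real r) - of_real A + kappa lam"

definition R1 :: "real \<Rightarrow> (nat \<Rightarrow> nat \<Rightarrow> real) \<Rightarrow> real \<Rightarrow> complex \<Rightarrow>
    (real \<Rightarrow> complex) \<Rightarrow> (real \<Rightarrow> complex) \<Rightarrow> (real \<Rightarrow> complex) \<Rightarrow> complex" where
  "R1 A C r lam w20 w11 w02 =
     (let g = gcoef A C r lam w20 w11 w02; k = kappa lam;
          I = (\<lambda>w. integral {-r..0} (\<lambda>\<theta>. w \<theta> * exp (- k * of_real \<theta>))) in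
       - 1 / (lam + cnj lam) * g 2 1 * (exp (- lam * of_real r) - exp (- k * of_real r))
       - 1 / (2 * lam) * cnj (g 1 2) * (exp (- cnj lam * of_real r) - exp (- k * of_real r))
       - 2 * g 1 1 * exp (- k * of_real r) * I w20
       - (g 2 0 + 2 * cnj (g 1 1)) * exp (- k * of_real r) * I w11
       - cnj (g 0 2) * exp (- k * of_real r) * I w02)"

definition R2 :: "real \<Rightarrow> (nat \<Rightarrow> nat \<Rightarrow> real) \<Rightarrow> real \<Rightarrow> complex \<Rightarrow>
    (real \<Rightarrow> complex) \<Rightarrow> (real \<Rightarrow> complex) \<Rightarrow> (real \<Rightarrow> complex) \<Rightarrow> complex" where
  "R2 A C r lam w20 w11 w02 =
     (let f = fcoef C r lam w20 w11 w02; g = gcoef A C r lam w20 w11 w02 in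
       g 2 1 + cnj (g 1 2) - f 2 1 + 2 * g 1 1 * w20 0
       + (g 2 0 + 2 * cnj (g 1 1)) * w11 0 + cnj (g 0 2) * w02 0)"

text \<open>The linear system (P1)-(P2) for X = w_{eps2,1}(0), Y = w_{eps2,1}(-r).\<close>
definition sysP :: "real \<Rightarrow> real \<Rightarrow> (nat \<Rightarrow> nat \<Rightarrow> real) \<Rightarrow> real \<Rightarrow> complex \<Rightarrow>
    (real \<Rightarrow> complex) \<Rightarrow> (real \<Rightarrow> complex) \<Rightarrow> (real \<Rightarrow> complex) \<Rightarrow> complex \<Rightarrow> complex \<Rightarrow> bool" where
  "sysP A B C r lam w20 w11 w02 X Y \<longleftrightarrow>
     - exp (- kappa lam * of_real r) * X + Y = R1 A C r lam w20 w11 w02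
     \<and> (of_real A - kappa lam) * X + of_real B * Y = R2 A C r lam w20 w11 w02"

definition W21 :: "real \<Rightarrow> real \<Rightarrow> (nat \<Rightarrow> nat \<Rightarrow> real) \<Rightarrow> real \<Rightarrow> real \<Rightarrow>
    (real \<Rightarrow> complex) \<Rightarrow> (real \<Rightarrow> complex) \<Rightarrow> (real \<Rightarrow> complex) \<Rightarrow> complex" where
  "W21 A B C r \<omega> w20 w11 w02 =
     (let lam = \<i> * of_real \<omega>;
          f = fcoef C r lam w20 w11 w02; g = gcoef A C r lam w20 w11 w02;
          Psi1 = (\<lambda>\<zeta>. Psi0 A r lam * exp (- lam * of_real \<zeta>));
          Psi2 = (\<lambda>\<zeta>. cnj (Psi1 \<zeta>));
          rho = (\<lambda>s. - 2 * of_real s * exp (lam * of_real s));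
          rhot = (\<lambda>\<zeta>. - 2 * of_real \<zeta> * exp (- lam * of_real \<zeta>)) in
       (f 2 1 * pairing B r (\<lambda>\<zeta>. Psi1 \<zeta> + Psi2 \<zeta>) rho
        - 2 * g 1 1 * pairing B r rhot w20
        - (g 2 0 + 2 * cnj (g 1 1)) * pairing B r rhot w11
        - cnj (g 0 2) * pairing B r rhot w02)
       / (2 * of_real r * of_real \<omega> * \<i> - 2 * of_real r * of_real A + 2))"

end

theory Submission
  imports Defs "HOL-Computational_Algebra.Polynomial" "HOL-Real_Asymp.Real_Asymp"
begin

text \<open>Eliminating \<open>Y\<close> from (P1)--(P2) gives \<open>X = (B\<^sub>\<epsilon> R\<^sub>\<epsilon>\<^sub>1 - R\<^sub>\<epsilon>\<^sub>2)/\<Delta>\<^sub>\<epsilon>\<close>, where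
  \<open>\<Delta>\<^sub>\<epsilon>\<close> is the characteristic function at \<open>\<kappa>\<^sub>\<epsilon>\<close> and hence nonzero for \<open>\<mu>\<^sub>\<epsilon> > 0\<close>.
  Each second-order coefficient \<open>w\<^sub>\<epsilon>\<^sub>i\<^sub>,\<^sub>j\<close> solves a linear equation on \<open>[-r,0]\<close> with
  exponential forcing, so the integrals in \<open>R\<^sub>\<epsilon>\<^sub>1\<close> and the endpoint values are explicit.
  Substituting them, \<open>X = S\<^sub>\<epsilon> (1/\<Delta>\<^sub>\<epsilon> - \<Psi>\<^sub>\<epsilon>\<^sub>1(0)/(2\<mu>\<^sub>\<epsilon>)) - Q\<^sub>\<epsilon>\<close> where \<open>S\<^sub>\<epsilon>, Q\<^sub>\<epsilon>\<close>
  converge by nonresonance of the unperturbed problem. The two singular terms cancel: their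
  difference is \<open>B e\<^sup>-\<^sup>\<lambda>\<^sup>r r\<^sup>2 \<phi>\<^sub>2(2\<mu>r) / ((1 + B e\<^sup>-\<^sup>\<lambda>\<^sup>r r)(1 + B e\<^sup>-\<^sup>\<lambda>\<^sup>r r \<phi>\<^sub>1(2\<mu>r)))\<close>
  with \<open>\<phi>\<^sub>1 \<rightarrow> 1\<close>, \<open>\<phi>\<^sub>2 \<rightarrow> 1/2\<close>. The same ODE identities evaluate the pairings in
  \<open>w\<^sub>2\<^sub>,\<^sub>1(0)\<close>, which identifies the limit.\<close>

section \<open>Taylor coefficients of the nonlinearity\<close>

lemma higher_deriv_poly:
  "(deriv ^^ n) (poly p) = poly ((pderiv ^^ n) (p :: 'a :: real_normed_field poly))"
proof (induction n)
  case (Suc n)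
  have "deriv (poly ((pderiv ^^ n) p)) = poly (pderiv ((pderiv ^^ n) p))"
    by (rule ext, rule DERIV_imp_deriv, rule poly_DERIV)
  with Suc show ?case by simp
qed simp

lemma higher_deriv_poly_at_0:
  "(deriv ^^ n) (poly p) 0 = fact n * coeff (p :: 'a :: {real_normed_field, semiring_char_0} poly) n"
  by (simp add: higher_deriv_poly poly_0_coeff_0 coeff_higher_pderiv pochhammer_fact)

text \<open>A bivariate polynomial is an \<open>'a poly poly\<close>; the outer variable is \<open>u\<close>, the inner one \<open>v\<close>.\<close>
definition poly2 :: "'a :: comm_semiring_0 poly poly \<Rightarrow> 'a \<Rightarrow> 'a \<Rightarrow> 'a" where
  "poly2 P u v = poly (poly P [:u:]) v"

definition coeff2 :: "'a :: zero poly poly \<Rightarrow> nat \<Rightarrow> nat \<Rightarrow> 'a" where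
  "coeff2 P i j = coeff (coeff P i) j"

lemma coeff_poly_const_poly: "coeff (poly P [:u:]) j = poly (map_poly (\<lambda>q. coeff q j) P) u"
  by (induction P) (auto simp: map_poly_pCons)

lemma taylor_coeff_poly2:
  "taylor_coeff (\<lambda>u v. poly2 P u v) i j = fact i * fact j * coeff2 P i j"
proof -
  have "(\<lambda>u. (deriv ^^ j) (\<lambda>v. poly2 P u v) 0) = poly (smult (fact j) (map_poly (\<lambda>q. coeff q j) P))"
  proof
    fix u
    have "(\<lambda>v. poly2 P u v) = poly (poly P [:u:])" by (auto simp: poly2_def)
    then show "(deriv ^^ j) (\<lambda>v. poly2 P u v) 0 = poly (smult (fact j) (map_poly (\<lambda>q. coeff q j) P)) u"
      by (simp add: higher_deriv_poly_at_0 coeff_poly_const_poly)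
  qed
  then show ?thesis
    unfolding taylor_coeff_def by (simp add: higher_deriv_poly_at_0 coeff_map_poly coeff2_def)
qed

definition quad_poly :: "complex \<Rightarrow> complex \<Rightarrow> complex \<Rightarrow> complex \<Rightarrow> complex \<Rightarrow> complex poly poly" where
  "quad_poly p q a b c = [: [:0, q, c/2:], [:p, b:], [:a/2:] :]"

definition fhat3_poly :: "(nat \<Rightarrow> nat \<Rightarrow> real) \<Rightarrow> complex poly poly \<Rightarrow> complex poly poly \<Rightarrow> complex poly poly" where
  "fhat3_poly C y z = (\<Sum>j\<le>3. \<Sum>k\<le>3. if 2 \<le> j + k \<and> j + k \<le> 3
      then [:[:of_real (C j k) / of_nat (fact j * fact k):]:] * y ^ j * z ^ k else 0)"

lemma poly2_quad_poly:
  "poly2 (quad_poly p q a b c) u v = u * p + v * q + a * u\<^sup>2 / 2 + b * u * v + c * v\<^sup>2 / 2"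
  by (simp add: poly2_def quad_poly_def algebra_simps power2_eq_square)

lemma poly2_fhat3_poly: "poly2 (fhat3_poly C y z) u v = fhat3 C (poly2 y u v) (poly2 z u v)"
  unfolding fhat3_poly_def fhat3_def poly2_def poly_sum by (intro sum.cong refl) (simp add: poly_power)

lemma fcoef_eq_coeff2:
  "fcoef C r lam w20 w11 w02 i j = fact i * fact j *
     coeff2 (fhat3_poly C (quad_poly 1 1 (w20 0) (w11 0) (w02 0))
       (quad_poly (exp (- lam * of_real r)) (exp (- cnj lam * of_real r)) (w20 (-r)) (w11 (-r)) (w02 (-r)))) i j"
  unfolding fcoef_def taylor_coeff_poly2[symmetric] poly2_fhat3_poly poly2_quad_poly by simp

lemma coeff2_mult: "coeff2 (P * Q) i j = (\<Sum>a\<le>i. \<Sum>b\<le>j. coeff2 P a b * coeff2 Q (i - a) (j - b))"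
  by (simp add: coeff2_def coeff_mult coeff_sum sum_distrib_left)

lemma coeff2_quad_poly:
  "coeff2 (quad_poly p q a b c) i j =
     (if i = 1 \<and> j = 0 then p else if i = 0 \<and> j = 1 then q else if i = 2 \<and> j = 0 then a/2
      else if i = 1 \<and> j = 1 then b else if i = 0 \<and> j = 2 then c/2 else 0)"
  by (auto simp: coeff2_def quad_poly_def coeff_pCons split: nat.split)

lemma coeff2_const: "coeff2 [:[:c:]:] i j = (if i = 0 \<and> j = 0 then c else 0)"
  by (simp add: coeff2_def coeff_pCons split: nat.split)

lemma coeff2_add: "coeff2 (P + Q) i j = coeff2 P i j + coeff2 Q i j"
  by (simp add: coeff2_def)

lemma coeff2_smult_const: "coeff2 (smult [:c:] P) i j = c * coeff2 P i j"
  by (simp add: coeff2_def)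

lemmas coeff2_simps = coeff2_add coeff2_smult_const coeff2_mult coeff2_const coeff2_quad_poly

definition f21_expr :: "(nat \<Rightarrow> nat \<Rightarrow> real) \<Rightarrow> complex \<Rightarrow> complex \<Rightarrow> complex \<Rightarrow> complex \<Rightarrow> complex \<Rightarrow> complex \<Rightarrow> complex \<Rightarrow> complex \<Rightarrow> complex" where
  "f21_expr C p q a b c a' b' c' =
     of_real (C 2 0) * (2*b + a) + 2 * of_real (C 1 1) * (b' + a'/2 + a*q/2 + b*p)
     + of_real (C 0 2) * (2*p*b' + q*a') + of_real (C 3 0) + of_real (C 2 1) * (q + 2*p)
     + of_real (C 1 2) * (2*p*q + p^2) + of_real (C 0 3) * p^2 * q"

lemma coeff2_fhat3_poly_21:
  "coeff2 (fhat3_poly C (quad_poly 1 1 a b c) (quad_poly p q a' b' c')) 2 1 = f21_expr C p q a b c a' b' c' / 2"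
  unfolding fhat3_poly_def f21_expr_def
  by (simp add: coeff2_def[symmetric] coeff2_simps eval_nat_numeral coeff_sum; simp add: field_simps)

lemma coeff2_fhat3_poly_12:
  "coeff2 (fhat3_poly C (quad_poly 1 1 a b c) (quad_poly p q a' b' c')) 1 2 = f21_expr C q p c b a c' b' a' / 2"
  unfolding fhat3_poly_def f21_expr_def
  by (simp add: coeff2_def[symmetric] coeff2_simps eval_nat_numeral coeff_sum; simp add: field_simps)

lemma coeff2_fhat3_poly_20:
  "coeff2 (fhat3_poly C (quad_poly 1 1 a b c) (quad_poly p q a' b' c')) 2 0
     = (of_real (C 2 0) + 2 * of_real (C 1 1) * p + of_real (C 0 2) * p^2) / 2"
  unfolding fhat3_poly_def
  by (simp add: coeff2_def[symmetric] coeff2_simps eval_nat_numeral coeff_sum; simp add: field_simps)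

lemma coeff2_fhat3_poly_02:
  "coeff2 (fhat3_poly C (quad_poly 1 1 a b c) (quad_poly p q a' b' c')) 0 2
     = (of_real (C 2 0) + 2 * of_real (C 1 1) * q + of_real (C 0 2) * q^2) / 2"
  unfolding fhat3_poly_def
  by (simp add: coeff2_def[symmetric] coeff2_simps eval_nat_numeral coeff_sum; simp add: field_simps)

lemma coeff2_fhat3_poly_11:
  "coeff2 (fhat3_poly C (quad_poly 1 1 a b c) (quad_poly p q a' b' c')) 1 1
     = of_real (C 2 0) + of_real (C 1 1) * (p + q) + of_real (C 0 2) * p * q"
  unfolding fhat3_poly_def
  by (simp add: coeff2_def[symmetric] coeff2_simps eval_nat_numeral coeff_sum; simp add: field_simps)

lemma fcoef_21:
  "fcoef C r lam w20 w11 w02 2 1 = f21_expr C (exp (- lam * of_real r)) (exp (- cnj lam * of_real r))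
     (w20 0) (w11 0) (w02 0) (w20 (-r)) (w11 (-r)) (w02 (-r))"
  unfolding fcoef_eq_coeff2 coeff2_fhat3_poly_21 by simp

lemma fcoef_12:
  "fcoef C r lam w20 w11 w02 1 2 = f21_expr C (exp (- cnj lam * of_real r)) (exp (- lam * of_real r))
     (w02 0) (w11 0) (w20 0) (w02 (-r)) (w11 (-r)) (w20 (-r))"
  unfolding fcoef_eq_coeff2 coeff2_fhat3_poly_12 by simp

lemma fcoef_20:
  "fcoef C r lam w20 w11 w02 2 0 = of_real (C 2 0) + 2 * of_real (C 1 1) * exp (- lam * of_real r)
     + of_real (C 0 2) * exp (- lam * of_real r)^2"
  unfolding fcoef_eq_coeff2 coeff2_fhat3_poly_20 by simp

lemma fcoef_02:
  "fcoef C r lam w20 w11 w02 0 2 = of_real (C 2 0) + 2 * of_real (C 1 1) * exp (- cnj lam * of_real r)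
     + of_real (C 0 2) * exp (- cnj lam * of_real r)^2"
  unfolding fcoef_eq_coeff2 coeff2_fhat3_poly_02 by simp

lemma fcoef_11:
  "fcoef C r lam w20 w11 w02 1 1 = of_real (C 2 0)
     + of_real (C 1 1) * (exp (- lam * of_real r) + exp (- cnj lam * of_real r))
     + of_real (C 0 2) * exp (- lam * of_real r) * exp (- cnj lam * of_real r)"
  unfolding fcoef_eq_coeff2 coeff2_fhat3_poly_11 by simp

section \<open>Exponentially forced linear equations\<close>

definition int_exp :: "real \<Rightarrow> complex \<Rightarrow> complex" where
  "int_exp r s = integral {-r..0} (\<lambda>\<theta>. exp (s * of_real \<theta>))"

definition int_lin_exp :: "real \<Rightarrow> complex \<Rightarrow> complex" where
  "int_lin_exp r s = integral {-r..0} (\<lambda>\<theta>. (of_real \<theta> + of_real r) * exp (s * of_real \<theta>))"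

lemma has_vector_derivative_exp_of_real:
  fixes s :: complex
  shows "((\<lambda>\<theta>. exp (s * of_real \<theta>)) has_vector_derivative (s * exp (s * of_real \<theta>))) (at \<theta> within S)"
proof -
  have "((\<lambda>z. exp (s * z)) has_field_derivative (s * exp (s * of_real \<theta>))) (at (of_real \<theta>))"
    by (auto intro!: derivative_eq_intros)
  from has_vector_derivative_real_field[OF this] show ?thesis .
qed

lemma has_vector_derivative_shifted_of_real:
  "((\<lambda>\<theta>. of_real \<theta> + of_real r :: complex) has_vector_derivative 1) (at \<theta> within S)"
  by (auto intro!: derivative_eq_intros)

lemma int_exp_has_integral: "((\<lambda>\<theta>. exp (s * of_real \<theta>)) has_integral int_exp r s) {-r..0}"
  unfolding int_exp_def by (intro integrable_integral integrable_continuous_interval continuous_intros)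

lemma int_lin_exp_has_integral:
  "((\<lambda>\<theta>. (of_real \<theta> + of_real r) * exp (s * of_real \<theta>)) has_integral int_lin_exp r s) {-r..0}"
  unfolding int_lin_exp_def by (intro integrable_integral integrable_continuous_interval continuous_intros)

lemma int_exp_eq:
  assumes "r \<ge> 0" "s \<noteq> 0"
  shows "int_exp r s = (1 - exp (- s * of_real r)) / s"
proof -
  have "((\<lambda>\<theta>. exp (s * of_real \<theta>) / s) has_vector_derivative exp (s * of_real \<theta>)) (at \<theta> within {-r..0})" for \<theta>
    by (rule has_vector_derivative_eq_rhs[OF has_vector_derivative_divide[OF has_vector_derivative_exp_of_real]])
       (use assms in simp)
  then have "((\<lambda>\<theta>. exp (s * of_real \<theta>)) has_integral (exp (s * of_real 0) / s - exp (s * of_real (-r)) / s)) {-r..0}"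
    using assms by (intro fundamental_theorem_of_calculus) auto
  from has_integral_unique[OF int_exp_has_integral this] show ?thesis
    by (simp add: diff_divide_distrib)
qed

lemma int_exp_0: "r \<ge> 0 \<Longrightarrow> int_exp r 0 = of_real r"
  by (simp add: int_exp_def scaleR_conv_of_real)

lemma cnj_int_exp: "r \<ge> 0 \<Longrightarrow> s \<noteq> 0 \<Longrightarrow> cnj (int_exp r s) = int_exp r (cnj s)"
  by (simp add: int_exp_eq exp_cnj)

lemma int_lin_exp_eq:
  assumes "r \<ge> 0" "s \<noteq> 0"
  shows "int_lin_exp r s = of_real r / s - (1 - exp (- s * of_real r)) / s\<^sup>2"
proof -
  let ?F = "\<lambda>\<theta>. (of_real \<theta> + of_real r) * exp (s * of_real \<theta>) / s - exp (s * of_real \<theta>) / s\<^sup>2"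
  have "(?F has_vector_derivative (of_real \<theta> + of_real r) * exp (s * of_real \<theta>)) (at \<theta> within {-r..0})" for \<theta>
    by (rule has_vector_derivative_eq_rhs[OF has_vector_derivative_diff[OF
          has_vector_derivative_divide[OF has_vector_derivative_mult[OF
            has_vector_derivative_shifted_of_real has_vector_derivative_exp_of_real]]
          has_vector_derivative_divide[OF has_vector_derivative_exp_of_real]]])
       (use assms in \<open>simp add: field_simps power2_eq_square\<close>)
  then have "((\<lambda>\<theta>. (of_real \<theta> + of_real r) * exp (s * of_real \<theta>)) has_integral (?F 0 - ?F (-r))) {-r..0}"
    using assms by (intro fundamental_theorem_of_calculus) auto
  from has_integral_unique[OF int_lin_exp_has_integral this] show ?thesis
    using assms by (simp add: field_simps)
qed

lemma int_lin_exp_0: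
  assumes "r \<ge> 0"
  shows "int_lin_exp r 0 = of_real r ^ 2 / 2"
proof -
  let ?F = "\<lambda>\<theta>. (of_real \<theta> + of_real r) * (of_real \<theta> + of_real r :: complex) / 2"
  have "(?F has_vector_derivative (of_real \<theta> + of_real r) * exp (0 * of_real \<theta>)) (at \<theta> within {-r..0})" for \<theta>
    by (rule has_vector_derivative_eq_rhs[OF has_vector_derivative_divide[OF has_vector_derivative_mult[OF
          has_vector_derivative_shifted_of_real has_vector_derivative_shifted_of_real]]])
       simp
  then have "((\<lambda>\<theta>. (of_real \<theta> + of_real r) * exp (0 * of_real \<theta>)) has_integral (?F 0 - ?F (-r))) {-r..0}"
    using assms by (intro fundamental_theorem_of_calculus) auto
  from has_integral_unique[OF int_lin_exp_has_integral this] show ?thesis by (simp add: power2_eq_square)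
qed

text \<open>Every second-order invariance equation (\<open>inv_eq\<close>) is of this form.\<close>
definition exp_forced_sol ::
    "real \<Rightarrow> complex \<Rightarrow> complex \<Rightarrow> complex \<Rightarrow> complex \<Rightarrow> complex \<Rightarrow> (real \<Rightarrow> complex) \<Rightarrow> bool" where
  "exp_forced_sol r \<nu> a l1 b l2 w \<longleftrightarrow>
     (\<forall>\<theta>\<in>{-r..0}. (w has_vector_derivative (\<nu> * w \<theta> + a * exp (l1 * of_real \<theta>) + b * exp (l2 * of_real \<theta>)))
        (at \<theta> within {-r..0}))"

context
  fixes r :: real and \<nu> a l1 b l2 :: complex and w :: "real \<Rightarrow> complex"
  assumes r: "r > 0" and sol: "exp_forced_sol r \<nu> a l1 b l2 w"
begin

lemma exp_forced_sol_continuous: "continuous_on {-r..0} w"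
  by (rule continuous_on_vector_derivative
      [of _ w "\<lambda>\<theta>. \<nu> * w \<theta> + a * exp (l1 * of_real \<theta>) + b * exp (l2 * of_real \<theta>)"])
     (use sol in \<open>simp add: exp_forced_sol_def\<close>)

lemma exp_forced_sol_weighted_integral:
  "(\<kappa> - \<nu>) * integral {-r..0} (\<lambda>\<theta>. w \<theta> * exp (- \<kappa> * of_real \<theta>))
     = w (-r) * exp (\<kappa> * of_real r) - w 0 + a * int_exp r (l1 - \<kappa>) + b * int_exp r (l2 - \<kappa>)"
proof -
  let ?v = "\<lambda>\<theta>. w \<theta> * exp (- \<kappa> * of_real \<theta>)"
  let ?I = "integral {-r..0} ?v"
  have "(?v has_vector_derivative
      (\<nu> - \<kappa>) * ?v \<theta> + a * exp ((l1 - \<kappa>) * of_real \<theta>) + b * exp ((l2 - \<kappa>) * of_real \<theta>))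
      (at \<theta> within {-r..0})" if "\<theta> \<in> {-r..0}" for \<theta>
    using sol that unfolding exp_forced_sol_def
    by (intro has_vector_derivative_eq_rhs[OF has_vector_derivative_mult[OF _ has_vector_derivative_exp_of_real]])
       (auto simp: algebra_simps simp flip: exp_add)
  then have "((\<lambda>\<theta>. (\<nu> - \<kappa>) * ?v \<theta> + a * exp ((l1 - \<kappa>) * of_real \<theta>) + b * exp ((l2 - \<kappa>) * of_real \<theta>))
      has_integral (?v 0 - ?v (-r))) {-r..0}"
    using r by (intro fundamental_theorem_of_calculus) auto
  moreover have "((\<lambda>\<theta>. (\<nu> - \<kappa>) * ?v \<theta> + a * exp ((l1 - \<kappa>) * of_real \<theta>) + b * exp ((l2 - \<kappa>) * of_real \<theta>))
      has_integral ((\<nu> - \<kappa>) * ?I + a * int_exp r (l1 - \<kappa>) + b * int_exp r (l2 - \<kappa>))) {-r..0}"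
    by (intro has_integral_add has_integral_mult_right int_exp_has_integral integrable_integral
        integrable_continuous_interval continuous_intros exp_forced_sol_continuous)
  ultimately show ?thesis
    by (auto dest: has_integral_unique simp: algebra_simps)
qed

lemma exp_forced_sol_moment_integral:
  "(\<kappa> - \<nu>) * integral {-r..0} (\<lambda>\<theta>. (of_real \<theta> + of_real r) * (w \<theta> * exp (- \<kappa> * of_real \<theta>)))
     = integral {-r..0} (\<lambda>\<theta>. w \<theta> * exp (- \<kappa> * of_real \<theta>)) - of_real r * w 0
       + a * int_lin_exp r (l1 - \<kappa>) + b * int_lin_exp r (l2 - \<kappa>)"
proof -
  let ?v = "\<lambda>\<theta>. w \<theta> * exp (- \<kappa> * of_real \<theta>)"
  let ?m = "\<lambda>\<theta>. (of_real \<theta> + of_real r) * ?v \<theta>"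
  let ?I = "integral {-r..0} ?v"
  let ?M = "integral {-r..0} ?m"
  let ?rhs = "\<lambda>\<theta>. (\<nu> - \<kappa>) * ?m \<theta> + ?v \<theta> + a * ((of_real \<theta> + of_real r) * exp ((l1 - \<kappa>) * of_real \<theta>))
      + b * ((of_real \<theta> + of_real r) * exp ((l2 - \<kappa>) * of_real \<theta>))"
  have "(?m has_vector_derivative ?rhs \<theta>) (at \<theta> within {-r..0})" if "\<theta> \<in> {-r..0}" for \<theta>
    using sol that unfolding exp_forced_sol_def
    by (intro has_vector_derivative_eq_rhs[OF has_vector_derivative_mult[OF
          has_vector_derivative_shifted_of_real has_vector_derivative_mult[OF _ has_vector_derivative_exp_of_real]]])
       (auto simp: algebra_simps simp flip: exp_add)
  then have "(?rhs has_integral (?m 0 - ?m (-r))) {-r..0}"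
    using r by (intro fundamental_theorem_of_calculus) auto
  moreover have "(?rhs has_integral ((\<nu> - \<kappa>) * ?M + ?I + a * int_lin_exp r (l1 - \<kappa>) + b * int_lin_exp r (l2 - \<kappa>))) {-r..0}"
    by (intro has_integral_add has_integral_mult_right int_lin_exp_has_integral integrable_integral
        integrable_continuous_interval continuous_intros exp_forced_sol_continuous)
  ultimately show ?thesis
    by (auto dest: has_integral_unique simp: algebra_simps)
qed

lemma exp_forced_sol_at_minus_r:
  "w (-r) = exp (- \<nu> * of_real r) * (w 0 - a * int_exp r (l1 - \<nu>) - b * int_exp r (l2 - \<nu>))"
proof -
  have "w (-r) * exp (\<nu> * of_real r) = w 0 - a * int_exp r (l1 - \<nu>) - b * int_exp r (l2 - \<nu>)"
    using exp_forced_sol_weighted_integral[of \<nu>] by (simp add: algebra_simps)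
  then show ?thesis by (simp add: exp_minus field_simps)
qed

context
  fixes A B :: real and f :: complex
  assumes bc: "\<nu> * w 0 + a + b = of_real A * w 0 + of_real B * w (-r) + f"
begin

lemma exp_forced_sol_at_0:
  assumes "charfun A B r \<nu> \<noteq> 0"
  shows "w 0 = (f - a - b - of_real B * exp (- \<nu> * of_real r) * (a * int_exp r (l1 - \<nu>) + b * int_exp r (l2 - \<nu>)))
    / charfun A B r \<nu>"
proof -
  have "charfun A B r \<nu> * w 0
      = f - a - b - of_real B * exp (- \<nu> * of_real r) * (a * int_exp r (l1 - \<nu>) + b * int_exp r (l2 - \<nu>))"
    using bc unfolding exp_forced_sol_at_minus_r charfun_def by (simp add: algebra_simps)
  with assms show ?thesis by (simp add: field_simps)
qed

lemma exp_forced_sol_value_plus_delay_integral: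
  assumes "\<kappa> \<noteq> \<nu>"
  shows "w 0 + of_real B * exp (- \<kappa> * of_real r) * integral {-r..0} (\<lambda>\<theta>. w \<theta> * exp (- \<kappa> * of_real \<theta>))
    = (charfun A B r \<kappa> * w 0 + a * (1 + of_real B * exp (- \<kappa> * of_real r) * int_exp r (l1 - \<kappa>))
       + b * (1 + of_real B * exp (- \<kappa> * of_real r) * int_exp r (l2 - \<kappa>)) - f) / (\<kappa> - \<nu>)"
proof -
  let ?I = "integral {-r..0} (\<lambda>\<theta>. w \<theta> * exp (- \<kappa> * of_real \<theta>))"
  let ?E = "exp (- \<kappa> * of_real r)"
  have E: "?E * exp (\<kappa> * of_real r) = 1" by (simp add: exp_minus field_simps)
  have "(\<kappa> - \<nu>) * (w 0 + of_real B * ?E * ?I) = (\<kappa> - \<nu>) * w 0 + of_real B * ?E * ((\<kappa> - \<nu>) * ?I)"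
    by (simp add: algebra_simps)
  also have "\<dots> = charfun A B r \<kappa> * w 0 + a * (1 + of_real B * ?E * int_exp r (l1 - \<kappa>))
       + b * (1 + of_real B * ?E * int_exp r (l2 - \<kappa>)) - f"
    unfolding exp_forced_sol_weighted_integral using bc E
    by (simp add: charfun_def algebra_simps)
  finally show ?thesis using assms by (simp add: field_simps)
qed

end

end

section \<open>The perturbed solution\<close>

lemma cnj_charfun: "cnj (charfun A B r z) = charfun A B r (cnj z)"
  by (simp add: charfun_def exp_cnj)

lemma charfun_kappa: "charfun A B r (kappa lam) = Delta A B r lam"
  by (simp add: charfun_def Delta_def algebra_simps)

lemma delay_difference_at_root:
  assumes "charfun A B r l = 0" "l \<noteq> \<kappa>"
  shows "1 + of_real B * (exp (- l * of_real r) - exp (- \<kappa> * of_real r)) / (\<kappa> - l)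
    = charfun A B r \<kappa> / (\<kappa> - l)"
proof -
  have "of_real B * exp (- l * of_real r) = l - of_real A"
    using assms(1) by (simp add: charfun_def)
  with assms(2) show ?thesis by (simp add: charfun_def field_simps)
qed

lemma delay_factor_at_root:
  assumes "r \<ge> 0" "charfun A B r l = 0" "l \<noteq> \<kappa>"
  shows "1 + of_real B * exp (- \<kappa> * of_real r) * int_exp r (l - \<kappa>) = charfun A B r \<kappa> / (\<kappa> - l)"
proof -
  have "of_real B * exp (- \<kappa> * of_real r) * int_exp r (l - \<kappa>)
      = of_real B * (exp (- l * of_real r) - exp (- \<kappa> * of_real r)) / (\<kappa> - l)"
    using assms by (simp add: int_exp_eq field_simps flip: exp_add)
  with delay_difference_at_root[OF assms(2,3)] show ?thesis by simp
qed

lemma second_order_D: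
  assumes "second_order A B r lam C w20 w11 w02"
  defines "f \<equiv> fcoef C r lam w20 w11 w02" and "g \<equiv> gcoef A C r lam w20 w11 w02"
  shows "exp_forced_sol r (2 * lam) (g 2 0) lam (cnj (g 0 2)) (cnj lam) w20"
    and "2 * lam * w20 0 + g 2 0 + cnj (g 0 2) = of_real A * w20 0 + of_real B * w20 (-r) + f 2 0"
    and "exp_forced_sol r (lam + cnj lam) (g 1 1) lam (cnj (g 1 1)) (cnj lam) w11"
    and "(lam + cnj lam) * w11 0 + g 1 1 + cnj (g 1 1) = of_real A * w11 0 + of_real B * w11 (-r) + f 1 1"
    and "exp_forced_sol r (2 * cnj lam) (g 0 2) lam (cnj (g 2 0)) (cnj lam) w02"
    and "2 * cnj lam * w02 0 + g 0 2 + cnj (g 2 0) = of_real A * w02 0 + of_real B * w02 (-r) + f 0 2"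
  using assms(1)
  unfolding second_order_def inv_eq_def exp_forced_sol_def Let_def f_def g_def by simp_all

definition sing_coeff :: "complex \<Rightarrow> complex \<Rightarrow> (nat \<Rightarrow> nat \<Rightarrow> complex) \<Rightarrow> (nat \<Rightarrow> nat \<Rightarrow> complex) \<Rightarrow> complex" where
  "sing_coeff lam k f g = f 2 1 + 2 * g 1 1 * f 2 0 / (k - 2 * lam)
     + (g 2 0 + 2 * cnj (g 1 1)) * f 1 1 / (k - (lam + cnj lam)) + cnj (g 0 2) * f 0 2 / (k - 2 * cnj lam)"

definition reg_part :: "complex \<Rightarrow> complex \<Rightarrow> (nat \<Rightarrow> nat \<Rightarrow> complex) \<Rightarrow> complex \<Rightarrow> complex \<Rightarrow> complex \<Rightarrow> complex" where
  "reg_part lam k g a b c =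
     (cnj (g 1 2) + 2 * g 1 1 * cnj (g 0 2) / (k - 2 * lam)
      + (g 2 0 + 2 * cnj (g 1 1)) * cnj (g 1 1) / (k - (lam + cnj lam))
      + cnj (g 0 2) * cnj (g 2 0) / (k - 2 * cnj lam)) / (2 * lam)
     + 2 * g 1 1 * a / (k - 2 * lam) + (g 2 0 + 2 * cnj (g 1 1)) * b / (k - (lam + cnj lam))
     + cnj (g 0 2) * c / (k - 2 * cnj lam)"

lemma X21_rearrangement:
  fixes D m l H1 H2 T1 T2 T3 d1 d2 d3 g21 gb12 f21 Psi c1 c2 c3 f1 f2 f3 a1 a2 a3 b1 b2 b3 w1 w2 w3 :: complex
  assumes "m \<noteq> 0" "l \<noteq> 0" "D \<noteq> 0" "d1 \<noteq> 0" "d2 \<noteq> 0" "d3 \<noteq> 0"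
    and "H1 = D / m" "H2 = D / (2 * l)"
    and "T1 = (D * w1 + a1 * H1 + b1 * H2 - f1) / d1"
    and "T2 = (D * w2 + a2 * H1 + b2 * H2 - f2) / d2"
    and "T3 = (D * w3 + a3 * H1 + b3 * H2 - f3) / d3"
    and "g21 = Psi * f21" "a1 = Psi * f1" "a2 = Psi * f2" "a3 = Psi * f3"
  shows "(- g21 * H1 - gb12 * H2 + f21 - c1 * T1 - c2 * T2 - c3 * T3) / D
     = (f21 + c1 * f1 / d1 + c2 * f2 / d2 + c3 * f3 / d3) * (1 / D - Psi / m)
       - ((gb12 + c1 * b1 / d1 + c2 * b2 / d2 + c3 * b3 / d3) / (2 * l)
          + c1 * w1 / d1 + c2 * w2 / d2 + c3 * w3 / d3)"
  using assms(1-6) unfolding assms(9-15) assms(7,8) by (simp add: field_simps)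

lemma delay_term_at_kappa:
  assumes r: "r > 0" and ch: "charfun A B r lam = 0" and m0: "lam + cnj lam \<noteq> 0" and l0: "lam \<noteq> 0"
    and sol: "exp_forced_sol r \<nu> a lam b (cnj lam) w"
    and bc: "\<nu> * w 0 + a + b = of_real A * w 0 + of_real B * w (-r) + f"
    and ne: "kappa lam \<noteq> \<nu>"
  shows "w 0 + of_real B * exp (- kappa lam * of_real r)
      * integral {-r..0} (\<lambda>\<theta>. w \<theta> * exp (- kappa lam * of_real \<theta>))
    = (Delta A B r lam * w 0 + a * (Delta A B r lam / (lam + cnj lam))
       + b * (Delta A B r lam / (2 * lam)) - f) / (kappa lam - \<nu>)"
proof -
  have k: "kappa lam = 2 * lam + cnj lam" by (simp add: kappa_def)
  have chc: "charfun A B r (cnj lam) = 0" using ch cnj_charfun[of A B r lam] by simp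
  have ne': "lam \<noteq> kappa lam" "cnj lam \<noteq> kappa lam" using m0 l0 by (auto simp: k)
  note H = delay_factor_at_root[OF less_imp_le[OF r]]
  have "1 + of_real B * exp (- kappa lam * of_real r) * int_exp r (lam - kappa lam) = Delta A B r lam / (lam + cnj lam)"
    using H[OF ch ne'(1)] unfolding charfun_kappa by (simp add: k)
  moreover have "1 + of_real B * exp (- kappa lam * of_real r) * int_exp r (cnj lam - kappa lam) = Delta A B r lam / (2 * lam)"
    using H[OF chc ne'(2)] unfolding charfun_kappa by (simp add: k)
  ultimately show ?thesis
    using exp_forced_sol_value_plus_delay_integral[OF r sol bc ne] by (simp add: charfun_kappa)
qed

lemma X21_decomposition:
  assumes r: "r > 0" and so: "second_order A B r lam C w20 w11 w02" and ch: "charfun A B r lam = 0"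
    and m0: "lam + cnj lam \<noteq> 0" and l0: "lam \<noteq> 0" and d3: "2 * lam \<noteq> cnj lam"
    and D0: "Delta A B r lam \<noteq> 0"
  defines "f \<equiv> fcoef C r lam w20 w11 w02" and "g \<equiv> gcoef A C r lam w20 w11 w02"
  shows "(of_real B * R1 A C r lam w20 w11 w02 - R2 A C r lam w20 w11 w02) / Delta A B r lam
    = sing_coeff lam (kappa lam) f g * (1 / Delta A B r lam - Psi0 A r lam / (lam + cnj lam))
      - reg_part lam (kappa lam) g (w20 0) (w11 0) (w02 0)"
proof -
  define k where "k = kappa lam"
  define E where "E = exp (- k * of_real r)"
  define D where "D = Delta A B r lam"
  define I where "I w = integral {-r..0} (\<lambda>\<theta>. w \<theta> * exp (- k * of_real \<theta>))" for w
  have k: "k = 2 * lam + cnj lam" by (simp add: k_def kappa_def)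
  have chk: "charfun A B r k = D" by (simp add: D_def k_def charfun_kappa)
  have chc: "charfun A B r (cnj lam) = 0" using ch cnj_charfun[of A B r lam] by simp
  have ne: "lam \<noteq> k" "cnj lam \<noteq> k" using m0 l0 by (auto simp: k)
  note P = second_order_D[OF so, folded f_def g_def]
  have ne2: "k \<noteq> 2 * lam" "k \<noteq> lam + cnj lam" "k \<noteq> 2 * cnj lam" using l0 d3 by (auto simp: k)
  note T = delay_term_at_kappa[OF r ch m0 l0]
  have T1: "w20 0 + of_real B * E * I w20 = (D * w20 0 + g 2 0 * (D / (lam + cnj lam))
      + cnj (g 0 2) * (D / (2 * lam)) - f 2 0) / (k - 2 * lam)"
    using T[OF P(1,2)] ne2(1) by (simp add: D_def E_def I_def k_def)
  have T2: "w11 0 + of_real B * E * I w11 = (D * w11 0 + g 1 1 * (D / (lam + cnj lam))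
      + cnj (g 1 1) * (D / (2 * lam)) - f 1 1) / (k - (lam + cnj lam))"
    using T[OF P(3,4)] ne2(2) by (simp add: D_def E_def I_def k_def)
  have T3: "w02 0 + of_real B * E * I w02 = (D * w02 0 + g 0 2 * (D / (lam + cnj lam))
      + cnj (g 2 0) * (D / (2 * lam)) - f 0 2) / (k - 2 * cnj lam)"
    using T[OF P(5,6)] ne2(3) by (simp add: D_def E_def I_def k_def)
  have N: "of_real B * R1 A C r lam w20 w11 w02 - R2 A C r lam w20 w11 w02
     = - g 2 1 * (1 + of_real B * (exp (- lam * of_real r) - E) / (k - lam))
       - cnj (g 1 2) * (1 + of_real B * (exp (- cnj lam * of_real r) - E) / (k - cnj lam)) + f 2 1
       - 2 * g 1 1 * (w20 0 + of_real B * E * I w20) - (g 2 0 + 2 * cnj (g 1 1)) * (w11 0 + of_real B * E * I w11)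
       - cnj (g 0 2) * (w02 0 + of_real B * E * I w02)"
    unfolding R1_def R2_def Let_def f_def[symmetric] g_def[symmetric] k_def[symmetric] E_def[symmetric] I_def
    by (simp add: k algebra_simps; simp add: add_divide_distrib[symmetric])
  have N1: "1 + of_real B * (exp (- lam * of_real r) - E) / (k - lam) = D / (lam + cnj lam)"
    using delay_difference_at_root[OF ch ne(1)] unfolding chk by (simp add: E_def k)
  have N2: "1 + of_real B * (exp (- cnj lam * of_real r) - E) / (k - cnj lam) = D / (2 * lam)"
    using delay_difference_at_root[OF chc ne(2)] unfolding chk by (simp add: E_def k)
  show ?thesis
    unfolding N N1 N2 D_def[symmetric] k_def[symmetric] sing_coeff_def reg_part_def
    by (rule X21_rearrangement[OF _ l0 _ _ _ _ refl refl T1 T2 T3])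
       (use m0 D0 l0 d3 in \<open>auto simp: D_def k g_def f_def gcoef_def\<close>)
qed

text \<open>The exponential-integrator functions \<open>\<phi>\<^sub>1, \<phi>\<^sub>2\<close> evaluated at \<open>-x\<close>; at \<open>x = 2 \<mu>\<^sub>\<epsilon> r\<close> they
  carry all the dependence on \<open>\<mu>\<^sub>\<epsilon>\<close> that degenerates as \<open>\<mu>\<^sub>\<epsilon> \<rightarrow> 0\<close>.\<close>
definition phi1 :: "real \<Rightarrow> real" where "phi1 x = (1 - exp (- x)) / x"
definition phi2 :: "real \<Rightarrow> real" where "phi2 x = (exp (- x) - 1 + x) / x\<^sup>2"

lemma phi1_tendsto: "(phi1 \<longlongrightarrow> 1) (at_right 0)"
  unfolding phi1_def by real_asymp

lemma phi2_tendsto: "(phi2 \<longlongrightarrow> 1/2) (at_right 0)"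
  unfolding phi2_def by real_asymp

lemma phi2_mult_self: "x \<noteq> 0 \<Longrightarrow> phi2 x * x = 1 - phi1 x"
  by (simp add: phi1_def phi2_def field_simps power2_eq_square)

lemma Psi0_eq_inverse:
  assumes "1 + (lam - of_real A) * of_real r \<noteq> 0"
  shows "Psi0 A r lam = 1 / (1 + (lam - of_real A) * of_real r)"
proof -
  define z where "z = 1 + (lam - of_real A) * of_real r"
  have "complex_of_real ((1 - A * r + Re lam * r)\<^sup>2 + (Im lam)\<^sup>2 * r\<^sup>2) = z * cnj z"
    by (simp add: z_def complex_eq_iff power2_eq_square algebra_simps)
  moreover have "1 + (cnj lam - of_real A) * of_real r = cnj z" by (simp add: z_def)
  ultimately have "Psi0 A r lam = cnj z / (z * cnj z)" by (simp add: Psi0_def)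
  also have "\<dots> = 1 / z" using assms by (simp flip: z_def)
  finally show ?thesis by (simp add: z_def)
qed

context
  fixes A B r :: real and lam :: complex
  assumes r: "r > 0" and root: "charfun A B r lam = 0" and mu: "Re lam \<noteq> 0"
begin

lemma Delta_at_root:
  "Delta A B r lam = of_real (2 * Re lam)
     * (1 + of_real B * exp (- lam * of_real r) * of_real r * of_real (phi1 (2 * Re lam * r)))"
proof -
  define x where "x = 2 * Re lam * r"
  have k: "kappa lam = lam + of_real (2 * Re lam)" by (simp add: kappa_def complex_eq_iff)
  then have E: "exp (- kappa lam * of_real r) = exp (- lam * of_real r) * of_real (exp (- x))"
    by (simp add: x_def algebra_simps flip: exp_add exp_of_real)
  have "complex_of_real (phi1 x * x) = of_real (1 - exp (- x))"
    using r mu by (simp add: phi1_def x_def)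
  then have ph: "of_real (phi1 x) * of_real x = (1 - of_real (exp (- x)) :: complex)" by simp
  have "of_real B * exp (- lam * of_real r) = lam - of_real A"
    using root by (simp add: charfun_def)
  then have "Delta A B r lam = of_real (2 * Re lam) + of_real B * exp (- lam * of_real r) * (1 - of_real (exp (- x)))"
    unfolding Delta_def E by (simp add: k algebra_simps)
  also have "\<dots> = of_real (2 * Re lam) * (1 + of_real B * exp (- lam * of_real r) * of_real r * of_real (phi1 x))"
    unfolding ph[symmetric] by (simp add: x_def algebra_simps)
  finally show ?thesis by (simp add: x_def)
qed

lemma singular_factor_eq:
  assumes hz: "1 + of_real B * exp (- lam * of_real r) * of_real r \<noteq> 0"
    and hq: "1 + of_real B * exp (- lam * of_real r) * of_real r * of_real (phi1 (2 * Re lam * r)) \<noteq> 0"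
  shows "1 / Delta A B r lam - Psi0 A r lam / (lam + cnj lam)
    = of_real B * exp (- lam * of_real r) * of_real r ^ 2 * of_real (phi2 (2 * Re lam * r))
      / ((1 + of_real B * exp (- lam * of_real r) * of_real r)
         * (1 + of_real B * exp (- lam * of_real r) * of_real r * of_real (phi1 (2 * Re lam * r))))"
proof -
  define x where "x = 2 * Re lam * r"
  define P where "P = of_real B * exp (- lam * of_real r) * of_real r"
  define M :: complex where "M = of_real (2 * Re lam)"
  have M0: "M \<noteq> 0" using mu by (simp add: M_def)
  have "of_real B * exp (- lam * of_real r) = lam - of_real A"
    using root by (simp add: charfun_def)
  then have Ps: "Psi0 A r lam = 1 / (1 + P)"
    using Psi0_eq_inverse[of lam A r] hz by (simp add: P_def)
  have D: "Delta A B r lam = M * (1 + P * of_real (phi1 x))"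
    using Delta_at_root by (simp add: M_def P_def x_def mult.assoc)
  have m: "lam + cnj lam = M" by (simp add: M_def complex_eq_iff)
  have "complex_of_real (phi2 x * x) = of_real (1 - phi1 x)"
    using phi2_mult_self[of x] r mu by (simp add: x_def)
  then have pp: "of_real (phi2 x) * M * of_real r = 1 - of_real (phi1 x)"
    by (simp add: M_def x_def mult_ac)
  have quot_diff: "1 / (M * Q) - (1 / H) / M = (H - Q) / (M * (H * Q))"
    if "H \<noteq> 0" "Q \<noteq> 0" for H Q :: complex
    using that M0 by (simp add: field_simps)
  have "1 / Delta A B r lam - Psi0 A r lam / (lam + cnj lam)
      = P * (1 - of_real (phi1 x)) / (M * ((1 + P) * (1 + P * of_real (phi1 x))))"
    unfolding D Ps m using hz hq by (subst quot_diff) (simp_all add: P_def x_def algebra_simps)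
  also have "\<dots> = M * (P * of_real r * of_real (phi2 x)) / (M * ((1 + P) * (1 + P * of_real (phi1 x))))"
    unfolding pp[symmetric] by (simp add: mult_ac)
  also have "\<dots> = P * of_real r * of_real (phi2 x) / ((1 + P) * (1 + P * of_real (phi1 x)))"
    using M0 by (rule mult_divide_mult_cancel_left)
  finally show ?thesis by (simp add: P_def x_def power2_eq_square mult_ac)
qed

end

section \<open>The unperturbed value\<close>

lemma exp_forced_sol_conjugate:
  fixes w w' :: "real \<Rightarrow> complex"
  assumes r: "r > 0"
    and sol: "exp_forced_sol r \<nu> a l b (cnj l) w"
    and bc: "\<nu> * w 0 + a + b = of_real A * w 0 + of_real B * w (-r) + f"
    and sol': "exp_forced_sol r (cnj \<nu>) (cnj b) l (cnj a) (cnj l) w'"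
    and bc': "cnj \<nu> * w' 0 + cnj b + cnj a = of_real A * w' 0 + of_real B * w' (-r) + cnj f"
    and ch: "charfun A B r \<nu> \<noteq> 0" and ne: "l \<noteq> \<nu>" "cnj l \<noteq> \<nu>"
  shows "w' 0 = cnj (w 0)" "w' (-r) = cnj (w (-r))"
proof -
  have ch': "charfun A B r (cnj \<nu>) \<noteq> 0" using ch cnj_charfun[of A B r \<nu>] by (metis complex_cnj_zero_iff)
  have K: "cnj (int_exp r (l - \<nu>)) = int_exp r (cnj l - cnj \<nu>)"
          "cnj (int_exp r (cnj l - \<nu>)) = int_exp r (l - cnj \<nu>)"
    using cnj_int_exp[of r "l - \<nu>"] cnj_int_exp[of r "cnj l - \<nu>"] r ne by simp_all
  show w0: "w' 0 = cnj (w 0)"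
    unfolding exp_forced_sol_at_0[OF r sol bc ch] exp_forced_sol_at_0[OF r sol' bc' ch']
    by (simp add: cnj_charfun[symmetric] exp_cnj K algebra_simps)
  show "w' (-r) = cnj (w (-r))"
    unfolding exp_forced_sol_at_minus_r[OF r sol] exp_forced_sol_at_minus_r[OF r sol'] w0
    by (simp add: exp_cnj K algebra_simps)
qed

context
  fixes A B r :: real and l :: complex
  assumes r: "r > 0" and cl: "cnj l = - l" and l0: "l \<noteq> 0"
    and root_pos: "charfun A B r l = 0" and root_neg: "charfun A B r (- l) = 0"
begin

lemma delay_at_roots:
  "of_real B * exp (- l * of_real r) = l - of_real A" "of_real B * exp (l * of_real r) = - l - of_real A"
  using root_pos root_neg by (simp_all add: charfun_def)

lemma delay_moment_at_conjugate_root: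
  "of_real B * exp (- l * of_real r) * int_lin_exp r (- 2 * l)
     = - (1 + of_real B * exp (- l * of_real r) * of_real r) / (2 * l)"
proof -
  define E where "E = exp (- l * of_real r)"
  have L: "int_lin_exp r (- 2 * l) = of_real r / (- 2 * l) - (1 - exp (2 * l * of_real r)) / (- 2 * l)\<^sup>2"
    using int_lin_exp_eq[of r "- 2 * l"] r l0 by simp
  have E2: "E * exp (2 * l * of_real r) = exp (l * of_real r)"
    by (simp add: E_def algebra_simps flip: exp_add)
  have "of_real B * E * int_lin_exp r (- 2 * l)
      = of_real B * E * of_real r / (- 2 * l) - (of_real B * E - of_real B * (E * exp (2 * l * of_real r))) / (- 2 * l)\<^sup>2"
    unfolding L by (simp add: algebra_simps diff_divide_distrib)
  also have "\<dots> = - (1 + of_real B * E * of_real r) / (2 * l)"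
    unfolding E2 delay_at_roots(2) delay_at_roots(1)[folded E_def] using l0 by (simp add: field_simps power2_eq_square)
  finally show ?thesis unfolding E_def .
qed

lemma delay_moment_at_double_root:
  "of_real B * exp (l * of_real r) * (int_lin_exp r (2 * l) - of_real r * int_exp r (2 * l))
     = (1 + of_real B * exp (- l * of_real r) * of_real r) / (2 * l)"
proof -
  define Eb where "Eb = exp (l * of_real r)"
  have L: "int_lin_exp r (2 * l) = of_real r / (2 * l) - (1 - exp (- (2 * l) * of_real r)) / (2 * l)\<^sup>2"
    using int_lin_exp_eq[of r "2 * l"] r l0 by simp
  have K: "int_exp r (2 * l) = (1 - exp (- (2 * l) * of_real r)) / (2 * l)"
    using int_exp_eq[of r "2 * l"] r l0 by simp
  have E2: "Eb * exp (- (2 * l) * of_real r) = exp (- l * of_real r)"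
    by (simp add: Eb_def algebra_simps flip: exp_add)
  have "of_real B * Eb * (int_lin_exp r (2 * l) - of_real r * int_exp r (2 * l))
      = of_real B * Eb * of_real r / (2 * l)
        - (of_real B * Eb - of_real B * (Eb * exp (- (2 * l) * of_real r))) / (2 * l)\<^sup>2
        - of_real r * (of_real B * Eb - of_real B * (Eb * exp (- (2 * l) * of_real r))) / (2 * l)"
    unfolding L K by (simp add: algebra_simps diff_divide_distrib)
  also have "\<dots> = (1 + of_real B * exp (- l * of_real r) * of_real r) / (2 * l)"
    unfolding E2 delay_at_roots(1) delay_at_roots(2)[folded Eb_def] using l0 by (simp add: field_simps power2_eq_square)
  finally show ?thesis unfolding Eb_def .
qed

text \<open>The hypothesis \<open>af\<close> is \<open>g\<^sub>i\<^sub>,\<^sub>j = \<Psi>\<^sub>1(0) f\<^sub>i\<^sub>,\<^sub>j\<close>, since \<open>\<Psi>\<^sub>1(0) = 1/h\<close> with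
  \<open>h = 1 + B e\<^sup>-\<^sup>l\<^sup>r r\<close> at a root \<open>l\<close>.\<close>
lemma pairing_rhot_exp_forced_sol:
  fixes w :: "real \<Rightarrow> complex"
  assumes sol: "exp_forced_sol r \<nu> a l b (cnj l) w"
    and bc: "\<nu> * w 0 + a + b = of_real A * w 0 + of_real B * w (-r) + f"
    and ne: "l \<noteq> \<nu>"
    and af: "a * (1 + of_real B * exp (- l * of_real r) * of_real r) = f"
  shows "pairing B r (\<lambda>\<zeta>. - 2 * of_real \<zeta> * exp (- l * of_real \<zeta>)) w
    = (2 * (1 + of_real B * exp (- l * of_real r) * of_real r) * w 0
       - a * of_real r ^ 2 * of_real B * exp (- l * of_real r)
       + b * (1 + of_real B * exp (- l * of_real r) * of_real r) / l) / (l - \<nu>)"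
proof -
  define E where "E = exp (- l * of_real r)"
  define h where "h = 1 + of_real B * E * of_real r"
  define I where "I = integral {-r..0} (\<lambda>\<theta>. w \<theta> * exp (- l * of_real \<theta>))"
  define M where "M = integral {-r..0} (\<lambda>\<theta>. (of_real \<theta> + of_real r) * (w \<theta> * exp (- l * of_real \<theta>)))"
  have "charfun A B r (cnj l) = 0" using root_neg by (simp add: cl)
  from delay_factor_at_root[OF _ this, of l] r l0 cl
  have "1 + of_real B * E * int_exp r (cnj l - l) = 0" by (simp add: root_pos E_def)
  then have "w 0 + of_real B * E * I = 0"
    using exp_forced_sol_value_plus_delay_integral[OF r sol bc, of l] ne r
    by (simp add: root_pos int_exp_0 af[symmetric] E_def I_def algebra_simps)
  then have BEI: "of_real B * E * I = - w 0" by (simp add: add_eq_0_iff)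
  have M: "(l - \<nu>) * M = I - of_real r * w 0 + a * int_lin_exp r 0 + b * int_lin_exp r (- 2 * l)"
    using exp_forced_sol_moment_integral[OF r sol, of l] by (simp add: M_def I_def cl)
  have "pairing B r (\<lambda>\<zeta>. - 2 * of_real \<zeta> * exp (- l * of_real \<zeta>)) w = - 2 * (of_real B * E * M)"
  proof -
    have "(\<lambda>\<zeta>. - 2 * of_real (\<zeta> + r) * exp (- l * of_real (\<zeta> + r)) * w \<zeta>)
        = (\<lambda>\<zeta>. (- 2 * E) * ((of_real \<zeta> + of_real r) * (w \<zeta> * exp (- l * of_real \<zeta>))))"
      by (simp add: E_def algebra_simps flip: exp_add)
    then show ?thesis unfolding pairing_def M_def by simp
  qed
  then have "(l - \<nu>) * pairing B r (\<lambda>\<zeta>. - 2 * of_real \<zeta> * exp (- l * of_real \<zeta>)) w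
      = - 2 * (of_real B * E * ((l - \<nu>) * M))"
    by (simp add: algebra_simps)
  also have "\<dots> = - 2 * (of_real B * E * I - of_real r * (of_real B * E) * w 0 + a * (of_real B * E) * int_lin_exp r 0
               + b * (of_real B * E * int_lin_exp r (- 2 * l)))"
    unfolding M by (simp add: algebra_simps)
  also have "\<dots> = 2 * h * w 0 - a * of_real r ^ 2 * (of_real B * E) + b * h / l"
    unfolding BEI delay_moment_at_conjugate_root[folded E_def] int_lin_exp_0[OF less_imp_le[OF r]] h_def
    using l0 by (simp add: field_simps power2_eq_square)
  finally show ?thesis using ne unfolding E_def h_def by (simp add: field_simps)
qed

lemma pairing_Psi_rho:
  "pairing B r (\<lambda>\<zeta>. Ps * exp (- l * of_real \<zeta>) + cnj (Ps * exp (- l * of_real \<zeta>)))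
       (\<lambda>s. - 2 * of_real s * exp (l * of_real s))
    = of_real B * exp (- l * of_real r) * of_real r ^ 2 * Ps
      - cnj Ps * (1 + of_real B * exp (- l * of_real r) * of_real r) / l"
proof -
  define E where "E = exp (- l * of_real r)"
  define Eb where "Eb = exp (l * of_real r)"
  have integrand: "(Ps * exp (- l * of_real (\<zeta> + r)) + cnj (Ps * exp (- l * of_real (\<zeta> + r))))
        * (- 2 * of_real \<zeta> * exp (l * of_real \<zeta>))
      = (- 2 * Ps * E) * ((of_real \<zeta> + of_real r) * exp (0 * of_real \<zeta>))
        + (2 * Ps * E * of_real r) * exp (0 * of_real \<zeta>)
        + (- 2 * cnj Ps * Eb) * ((of_real \<zeta> + of_real r) * exp ((2 * l) * of_real \<zeta>))
        + (2 * cnj Ps * Eb * of_real r) * exp ((2 * l) * of_real \<zeta>)" for \<zeta> :: real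
    by (simp add: E_def Eb_def exp_cnj cl algebra_simps flip: exp_add)
  have "pairing B r (\<lambda>\<zeta>. Ps * exp (- l * of_real \<zeta>) + cnj (Ps * exp (- l * of_real \<zeta>)))
          (\<lambda>s. - 2 * of_real s * exp (l * of_real s))
      = of_real B * ((- 2 * Ps * E) * int_lin_exp r 0 + (2 * Ps * E * of_real r) * int_exp r 0
          + (- 2 * cnj Ps * Eb) * int_lin_exp r (2 * l) + (2 * cnj Ps * Eb * of_real r) * int_exp r (2 * l))"
  proof -
    have "((\<lambda>\<zeta>. (- 2 * Ps * E) * ((of_real \<zeta> + of_real r) * exp (0 * of_real \<zeta>))
          + (2 * Ps * E * of_real r) * exp (0 * of_real \<zeta>)
          + (- 2 * cnj Ps * Eb) * ((of_real \<zeta> + of_real r) * exp ((2 * l) * of_real \<zeta>))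
          + (2 * cnj Ps * Eb * of_real r) * exp ((2 * l) * of_real \<zeta>))
        has_integral ((- 2 * Ps * E) * int_lin_exp r 0 + (2 * Ps * E * of_real r) * int_exp r 0
          + (- 2 * cnj Ps * Eb) * int_lin_exp r (2 * l) + (2 * cnj Ps * Eb * of_real r) * int_exp r (2 * l)))
        {-r..0}"
      by (intro has_integral_add has_integral_mult_right int_lin_exp_has_integral int_exp_has_integral)
    then show ?thesis unfolding pairing_def integrand by (simp add: integral_unique)
  qed
  also have "\<dots> = of_real B * E * of_real r ^ 2 * Ps
      - 2 * cnj Ps * (of_real B * Eb * (int_lin_exp r (2 * l) - of_real r * int_exp r (2 * l)))"
    using r by (simp add: int_lin_exp_0 int_exp_0 algebra_simps power2_eq_square)
  also have "\<dots> = of_real B * E * of_real r ^ 2 * Ps - cnj Ps * (1 + of_real B * E * of_real r) / l"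
    unfolding Eb_def delay_moment_at_double_root E_def using l0 by (simp add: field_simps)
  finally show ?thesis unfolding E_def .
qed

end

lemma cnj_f21_expr:
  "cnj (f21_expr C p q a b c a' b' c') = f21_expr C (cnj p) (cnj q) (cnj a) (cnj b) (cnj c) (cnj a') (cnj b') (cnj c')"
  by (simp add: f21_expr_def)

context
  fixes A B r :: real and l :: complex and C :: "nat \<Rightarrow> nat \<Rightarrow> real" and w20 w11 w02 :: "real \<Rightarrow> complex"
  assumes r: "r > 0" and cl: "cnj l = - l" and l0: "l \<noteq> 0"
    and so: "second_order A B r l C w20 w11 w02"
    and c2: "charfun A B r (2 * l) \<noteq> 0" and c0: "charfun A B r 0 \<noteq> 0"
begin

lemma second_order_conjugate_symmetry:
  "w02 0 = cnj (w20 0)" "w02 (-r) = cnj (w20 (-r))" "w11 0 = cnj (w11 0)" "w11 (-r) = cnj (w11 (-r))"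
proof -
  define f where "f = fcoef C r l w20 w11 w02"
  define g where "g = gcoef A C r l w20 w11 w02"
  note P = second_order_D[OF so, folded f_def g_def]
  have "f 0 2 = cnj (f 2 0)" "cnj (f 1 1) = f 1 1"
    unfolding f_def fcoef_02 fcoef_20 fcoef_11 by (simp_all add: exp_cnj algebra_simps)
  then have bc02: "cnj (2 * l) * w02 0 + cnj (cnj (g 0 2)) + cnj (g 2 0)
        = of_real A * w02 0 + of_real B * w02 (-r) + cnj (f 2 0)"
    and bc11: "cnj (l + cnj l) * w11 0 + cnj (cnj (g 1 1)) + cnj (g 1 1)
        = of_real A * w11 0 + of_real B * w11 (-r) + cnj (f 1 1)"
    using P(4,6) by (simp_all add: cl)
  have sol02: "exp_forced_sol r (cnj (2 * l)) (cnj (cnj (g 0 2))) l (cnj (g 2 0)) (cnj l) w02"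
    using P(5) by simp
  have sol11: "exp_forced_sol r (cnj (l + cnj l)) (cnj (cnj (g 1 1))) l (cnj (g 1 1)) (cnj l) w11"
    using P(3) by (simp add: cl)
  have ne: "l \<noteq> 2 * l" "cnj l \<noteq> 2 * l" "l \<noteq> l + cnj l" "cnj l \<noteq> l + cnj l"
    using l0 by (simp_all add: cl)
  have c0': "charfun A B r (l + cnj l) \<noteq> 0" using c0 by (simp add: cl)
  show "w02 0 = cnj (w20 0)" "w02 (-r) = cnj (w20 (-r))"
    using exp_forced_sol_conjugate[OF r P(1,2) sol02 bc02 c2 ne(1,2)] by simp_all
  show "w11 0 = cnj (w11 0)" "w11 (-r) = cnj (w11 (-r))"
    using exp_forced_sol_conjugate[OF r P(3,4) sol11 bc11 c0' ne(3,4)] by simp_all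
qed

lemma cnj_fcoef_12: "cnj (fcoef C r l w20 w11 w02 1 2) = fcoef C r l w20 w11 w02 2 1"
  unfolding fcoef_12 fcoef_21 cnj_f21_expr using second_order_conjugate_symmetry
  by (simp add: exp_cnj)

end

lemma W21_rearrangement:
  fixes l h B E r Ps Psb f21 c1 c2 c3 f1 f2 f3 ga gb gc b1 b2 b3 w1 w2 w3 d1 d2 d3 gb12 P1 pr1 pr2 pr3 :: complex
  assumes "l \<noteq> 0" "h \<noteq> 0" "d1 \<noteq> 0" "d2 \<noteq> 0" "d3 \<noteq> 0" "Ps * h = 1" "gb12 = Psb * f21"
    "P1 = B * E * r\<^sup>2 * Ps - Psb * h / l"
    "pr1 = (2 * h * w1 - ga * r\<^sup>2 * B * E + b1 * h / l) / d1"
    "pr2 = (2 * h * w2 - gb * r\<^sup>2 * B * E + b2 * h / l) / d2"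
    "pr3 = (2 * h * w3 - gc * r\<^sup>2 * B * E + b3 * h / l) / d3"
    "ga = Ps * f1" "gb = Ps * f2" "gc = Ps * f3"
  shows "(f21 + c1 * f1 / d1 + c2 * f2 / d2 + c3 * f3 / d3) * (B * E * r\<^sup>2 * of_real (1/2) / (h * h))
     - ((gb12 + c1 * b1 / d1 + c2 * b2 / d2 + c3 * b3 / d3) / (2 * l) + c1 * w1 / d1 + c2 * w2 / d2 + c3 * w3 / d3)
     = (f21 * P1 - c1 * pr1 - c2 * pr2 - c3 * pr3) / (2 * h)"
proof -
  have Ps: "Ps = 1 / h" using assms(2,6) by (simp add: field_simps)
  show ?thesis unfolding assms(7-14) Ps using assms(1-5) by (simp add: field_simps)
qed

lemma imaginary_root_normalisation:
  assumes r: "r > 0" and om: "\<omega> \<noteq> 0" and root: "charfun A B r (\<i> * of_real \<omega>) = 0"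
  defines "h \<equiv> 1 + of_real B * exp (- (\<i> * of_real \<omega>) * of_real r) * of_real r"
  shows "h = 1 + (\<i> * of_real \<omega> - of_real A) * of_real r" and "h \<noteq> 0"
    and "Psi0 A r (\<i> * of_real \<omega>) * h = 1"
proof -
  show h: "h = 1 + (\<i> * of_real \<omega> - of_real A) * of_real r"
    using root by (simp add: h_def charfun_def)
  then have "Im h = r * \<omega>" by simp
  with r om show h0: "h \<noteq> 0" by auto
  with h show "Psi0 A r (\<i> * of_real \<omega>) * h = 1"
    using Psi0_eq_inverse[of "\<i> * of_real \<omega>" A r] by simp
qed

lemma W21_eq:
  assumes r: "r > 0" and om: "\<omega> > 0"
    and root_pos: "charfun A B r (\<i> * of_real \<omega>) = 0" and root_neg: "charfun A B r (- \<i> * of_real \<omega>) = 0"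
    and so: "second_order A B r (\<i> * of_real \<omega>) C w20 w11 w02"
    and c2: "charfun A B r (2 * (\<i> * of_real \<omega>)) \<noteq> 0" and c0: "charfun A B r 0 \<noteq> 0"
  defines "l \<equiv> \<i> * of_real \<omega>"
  defines "f \<equiv> fcoef C r l w20 w11 w02" and "g \<equiv> gcoef A C r l w20 w11 w02"
  defines "E \<equiv> exp (- l * of_real r)"
  defines "h \<equiv> 1 + of_real B * E * of_real r"
  shows "sing_coeff l (kappa l) f g * (of_real B * E * of_real r ^ 2 * of_real (1/2) / (h * h))
     - reg_part l (kappa l) g (w20 0) (w11 0) (w02 0) = W21 A B C r \<omega> w20 w11 w02"
proof -
  have cl: "cnj l = - l" and l0: "l \<noteq> 0" and kap: "kappa l = l"
    using om by (simp_all add: l_def kappa_def)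
  note normalisation = imaginary_root_normalisation[OF r _ root_pos, folded l_def, folded E_def, folded h_def]
  have h: "h = 1 + (l - of_real A) * of_real r" and h0: "h \<noteq> 0" and Psh: "Psi0 A r l * h = 1"
    using normalisation om by simp_all
  have rp: "charfun A B r l = 0" and rn: "charfun A B r (- l) = 0"
    using root_pos root_neg by (simp_all add: l_def)
  note P = second_order_D[OF so[folded l_def], folded f_def g_def]
  have g: "g i j = Psi0 A r l * f i j" for i j by (simp add: g_def f_def gcoef_def)
  have gb12: "cnj (g 1 2) = cnj (Psi0 A r l) * f 2 1"
    using cnj_fcoef_12[OF r cl l0 so[folded l_def]] c2 c0 by (simp add: g f_def l_def)
  note pr = pairing_rhot_exp_forced_sol[OF r cl l0 rp rn,
      folded E_def, folded h_def]
  have pr20: "pairing B r (\<lambda>\<zeta>. - 2 * of_real \<zeta> * exp (- l * of_real \<zeta>)) w20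
     = (2 * h * w20 0 - g 2 0 * of_real r ^ 2 * of_real B * E + cnj (g 0 2) * h / l) / (l - 2 * l)"
    by (rule pr[OF P(1,2)]) (use l0 Psh in \<open>auto simp: g\<close>)
  have pr11: "pairing B r (\<lambda>\<zeta>. - 2 * of_real \<zeta> * exp (- l * of_real \<zeta>)) w11
     = (2 * h * w11 0 - g 1 1 * of_real r ^ 2 * of_real B * E + cnj (g 1 1) * h / l) / (l - (l + cnj l))"
    by (rule pr[OF P(3,4)]) (use l0 Psh in \<open>auto simp: g cl\<close>)
  have pr02: "pairing B r (\<lambda>\<zeta>. - 2 * of_real \<zeta> * exp (- l * of_real \<zeta>)) w02
     = (2 * h * w02 0 - g 0 2 * of_real r ^ 2 * of_real B * E + cnj (g 2 0) * h / l) / (l - 2 * cnj l)"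
    by (rule pr[OF P(5,6)]) (use l0 Psh in \<open>auto simp: g cl\<close>)
  have den: "2 * of_real r * of_real \<omega> * \<i> - 2 * of_real r * of_real A + 2 = 2 * h"
    by (simp add: h l_def algebra_simps)
  have W: "W21 A B C r \<omega> w20 w11 w02
      = (f 2 1 * pairing B r (\<lambda>\<zeta>. Psi0 A r l * exp (- l * of_real \<zeta>) + cnj (Psi0 A r l * exp (- l * of_real \<zeta>)))
            (\<lambda>s. - 2 * of_real s * exp (l * of_real s))
        - 2 * g 1 1 * pairing B r (\<lambda>\<zeta>. - 2 * of_real \<zeta> * exp (- l * of_real \<zeta>)) w20
        - (g 2 0 + 2 * cnj (g 1 1)) * pairing B r (\<lambda>\<zeta>. - 2 * of_real \<zeta> * exp (- l * of_real \<zeta>)) w11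
        - cnj (g 0 2) * pairing B r (\<lambda>\<zeta>. - 2 * of_real \<zeta> * exp (- l * of_real \<zeta>)) w02) / (2 * h)"
    unfolding W21_def Let_def den[symmetric] l_def f_def g_def ..
  show ?thesis
    unfolding W pairing_Psi_rho[OF r cl l0 rp rn, folded E_def, folded h_def] pr20 pr11 pr02
      sing_coeff_def reg_part_def kap
    by (rule W21_rearrangement[where ga = "g 2 0" and gb = "g 1 1" and gc = "g 0 2"
          and Ps = "Psi0 A r l" and Psb = "cnj (Psi0 A r l)"])
       (use l0 h0 Psh gb12 in \<open>simp_all add: g cl\<close>)
qed

section \<open>Passage to the limit\<close>

lemma int_exp_tendsto:
  assumes "(s \<longlongrightarrow> s0) F" "s0 \<noteq> 0" "r \<ge> 0"
  shows "((\<lambda>e. int_exp r (s e)) \<longlongrightarrow> int_exp r s0) F"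
proof -
  have "((\<lambda>e. (1 - exp (- s e * of_real r)) / s e) \<longlongrightarrow> int_exp r s0) F"
    using assms by (auto intro!: tendsto_eq_intros simp: int_exp_eq)
  moreover have "eventually (\<lambda>e. (1 - exp (- s e * of_real r)) / s e = int_exp r (s e)) F"
    using tendsto_imp_eventually_ne[OF assms(1,2)] by eventually_elim (use assms(3) in \<open>simp add: int_exp_eq\<close>)
  ultimately show ?thesis by (rule Lim_transform_eventually)
qed

lemma charfun_tendsto:
  "(A \<longlongrightarrow> A0) F \<Longrightarrow> (B \<longlongrightarrow> B0) F \<Longrightarrow> (z \<longlongrightarrow> z0) F
    \<Longrightarrow> ((\<lambda>e. charfun (A e) (B e) r (z e)) \<longlongrightarrow> charfun A0 B0 r z0) F"
  unfolding charfun_def by (intro tendsto_intros)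

lemma Psi0_tendsto:
  assumes "(A \<longlongrightarrow> A0) F" "(lam \<longlongrightarrow> l) F" "(1 - A0 * r + Re l * r)\<^sup>2 + (Im l)\<^sup>2 * r\<^sup>2 \<noteq> 0"
  shows "((\<lambda>e. Psi0 (A e) r (lam e)) \<longlongrightarrow> Psi0 A0 r l) F"
  unfolding Psi0_def by (intro tendsto_intros assms(1,2)) (metis assms(3) of_real_eq_0_iff)

lemma exp_forced_sol_endpoints_tendsto:
  fixes w :: "'e \<Rightarrow> real \<Rightarrow> complex" and w0 :: "real \<Rightarrow> complex"
  assumes r: "r > 0"
    and lamT: "(lam \<longlongrightarrow> l) F" and AT: "(Ae \<longlongrightarrow> A) F" and BT: "(Be \<longlongrightarrow> B) F"
    and nuT: "(nu \<longlongrightarrow> nu0) F" and aT: "(a \<longlongrightarrow> a0) F" and bT: "(b \<longlongrightarrow> b0) F" and fT: "(f \<longlongrightarrow> f0) F"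
    and nz: "charfun A B r nu0 \<noteq> 0" and ne: "l \<noteq> nu0" "cnj l \<noteq> nu0"
    and ev: "eventually (\<lambda>e. exp_forced_sol r (nu e) (a e) (lam e) (b e) (cnj (lam e)) (w e)
           \<and> nu e * w e 0 + a e + b e = of_real (Ae e) * w e 0 + of_real (Be e) * w e (-r) + f e) F"
    and sol0: "exp_forced_sol r nu0 a0 l b0 (cnj l) w0"
    and bc0: "nu0 * w0 0 + a0 + b0 = of_real A * w0 0 + of_real B * w0 (-r) + f0"
  shows "((\<lambda>e. w e 0) \<longlongrightarrow> w0 0) F" "((\<lambda>e. w e (-r)) \<longlongrightarrow> w0 (-r)) F"
proof -
  have chT: "((\<lambda>e. charfun (Ae e) (Be e) r (nu e)) \<longlongrightarrow> charfun A B r nu0) F"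
    by (rule charfun_tendsto[OF AT BT nuT])
  have K: "((\<lambda>e. int_exp r (lam e - nu e)) \<longlongrightarrow> int_exp r (l - nu0)) F"
          "((\<lambda>e. int_exp r (cnj (lam e) - nu e)) \<longlongrightarrow> int_exp r (cnj l - nu0)) F"
    using r ne by (auto intro!: int_exp_tendsto tendsto_intros lamT nuT)
  have ev0: "eventually (\<lambda>e. w e 0 = (f e - a e - b e - of_real (Be e) * exp (- nu e * of_real r)
      * (a e * int_exp r (lam e - nu e) + b e * int_exp r (cnj (lam e) - nu e))) / charfun (Ae e) (Be e) r (nu e)) F"
    using ev tendsto_imp_eventually_ne[OF chT nz] by eventually_elim (use exp_forced_sol_at_0[OF r] in blast)
  have "((\<lambda>e. (f e - a e - b e - of_real (Be e) * exp (- nu e * of_real r)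
      * (a e * int_exp r (lam e - nu e) + b e * int_exp r (cnj (lam e) - nu e))) / charfun (Ae e) (Be e) r (nu e))
      \<longlongrightarrow> w0 0) F"
    unfolding exp_forced_sol_at_0[OF r sol0 bc0 nz] by (intro tendsto_intros fT aT bT BT nuT K chT nz)
  then show T0: "((\<lambda>e. w e 0) \<longlongrightarrow> w0 0) F"
    by (rule Lim_transform_eventually) (use ev0 in \<open>auto elim: eventually_mono\<close>)
  have evr: "eventually (\<lambda>e. w e (-r)
      = exp (- nu e * of_real r) * (w e 0 - a e * int_exp r (lam e - nu e) - b e * int_exp r (cnj (lam e) - nu e))) F"
    using ev by eventually_elim (use exp_forced_sol_at_minus_r[OF r] in blast)
  have "((\<lambda>e. exp (- nu e * of_real r) * (w e 0 - a e * int_exp r (lam e - nu e) - b e * int_exp r (cnj (lam e) - nu e)))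
      \<longlongrightarrow> w0 (-r)) F"
    unfolding exp_forced_sol_at_minus_r[OF r sol0] by (intro tendsto_intros T0 aT bT nuT K)
  then show "((\<lambda>e. w e (-r)) \<longlongrightarrow> w0 (-r)) F"
    by (rule Lim_transform_eventually) (use evr in \<open>auto elim: eventually_mono\<close>)
qed

lemma sysP_unique_solution:
  assumes D: "Delta A B r lam \<noteq> 0"
  shows "(\<exists>!XY. sysP A B C r lam w20 w11 w02 (fst XY) (snd XY))
    \<and> (\<forall>X Y. sysP A B C r lam w20 w11 w02 X Y
         \<longrightarrow> X = (of_real B * R1 A C r lam w20 w11 w02 - R2 A C r lam w20 w11 w02) / Delta A B r lam)"
proof -
  define E where "E = exp (- kappa lam * of_real r)"
  define X0 where "X0 = (of_real B * R1 A C r lam w20 w11 w02 - R2 A C r lam w20 w11 w02) / Delta A B r lam"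
  have Delta: "Delta A B r lam = - of_real B * E - of_real A + kappa lam" by (simp add: Delta_def E_def)
  have sol: "sysP A B C r lam w20 w11 w02 X Y \<longleftrightarrow> X = X0 \<and> Y = R1 A C r lam w20 w11 w02 + E * X" for X Y
    using D unfolding sysP_def X0_def E_def[symmetric] Delta
    by (auto simp: field_simps)
  then have "\<exists>!XY. sysP A B C r lam w20 w11 w02 (fst XY) (snd XY)"
    by (intro ex1I[of _ "(X0, R1 A C r lam w20 w11 w02 + E * X0)"]) auto
  with sol show ?thesis by (simp add: X0_def)
qed

locale hopf_perturbation =
  fixes r A B \<omega> :: real and C :: "nat \<Rightarrow> nat \<Rightarrow> real"
    and Ae Be :: "real \<Rightarrow> real" and lam :: "real \<Rightarrow> complex"
    and w20 w11 w02 :: "real \<Rightarrow> complex" and we20 we11 we02 :: "real \<Rightarrow> real \<Rightarrow> complex"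
  assumes r_pos: "r > 0" and om_pos: "\<omega> > 0"
    and root_pos: "charfun A B r (\<i> * of_real \<omega>) = 0"
    and root_neg: "charfun A B r (- \<i> * of_real \<omega>) = 0"
    and other_roots: "\<forall>z. charfun A B r z = 0 \<longrightarrow> z \<noteq> \<i> * of_real \<omega>
                          \<longrightarrow> z \<noteq> - \<i> * of_real \<omega> \<longrightarrow> Re z < 0"
    and Ae_lim: "(Ae \<longlongrightarrow> A) (at_right 0)"
    and Be_lim: "(Be \<longlongrightarrow> B) (at_right 0)"
    and lam_root: "eventually (\<lambda>e. charfun (Ae e) (Be e) r (lam e) = 0 \<and> Re (lam e) > 0) (at_right 0)"
    and lam_lim: "(lam \<longlongrightarrow> \<i> * of_real \<omega>) (at_right 0)"
    and w_unpert: "second_order A B r (\<i> * of_real \<omega>) C w20 w11 w02"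
    and w_pert: "eventually (\<lambda>e. second_order (Ae e) (Be e) r (lam e) C (we20 e) (we11 e) (we02 e)) (at_right 0)"
begin

abbreviation "l0 \<equiv> \<i> * complex_of_real \<omega>"
abbreviation "fe e \<equiv> fcoef C r (lam e) (we20 e) (we11 e) (we02 e)"
abbreviation "ge e \<equiv> gcoef (Ae e) C r (lam e) (we20 e) (we11 e) (we02 e)"
abbreviation "f0 \<equiv> fcoef C r l0 w20 w11 w02"
abbreviation "g0 \<equiv> gcoef A C r l0 w20 w11 w02"
abbreviation "X21 e \<equiv> (of_real (Be e) * R1 (Ae e) C r (lam e) (we20 e) (we11 e) (we02 e)
    - R2 (Ae e) C r (lam e) (we20 e) (we11 e) (we02 e)) / Delta (Ae e) (Be e) r (lam e)"

lemma nonresonance: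
  "charfun A B r (2 * l0) \<noteq> 0" "charfun A B r (l0 + cnj l0) \<noteq> 0" "charfun A B r (2 * cnj l0) \<noteq> 0"
  using other_roots om_pos by (auto simp: complex_eq_iff)

lemma Psi0_perturbed_tendsto: "((\<lambda>e. Psi0 (Ae e) r (lam e)) \<longlongrightarrow> Psi0 A r l0) (at_right 0)"
proof (rule Psi0_tendsto[OF Ae_lim lam_lim])
  have "(Im l0)\<^sup>2 * r\<^sup>2 > 0" using om_pos r_pos by simp
  then show "(1 - A * r + Re l0 * r)\<^sup>2 + (Im l0)\<^sup>2 * r\<^sup>2 \<noteq> 0"
    by (metis add_nonneg_pos less_irrefl zero_le_power2)
qed

lemma second_order_coeffs_tendsto:
  assumes "i + j = 2"
  shows "((\<lambda>e. fe e i j) \<longlongrightarrow> f0 i j) (at_right 0)" "((\<lambda>e. ge e i j) \<longlongrightarrow> g0 i j) (at_right 0)"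
proof -
  from assms consider "i = 2" "j = 0" | "i = 1" "j = 1" | "i = 0" "j = 2" by linarith
  then show f: "((\<lambda>e. fe e i j) \<longlongrightarrow> f0 i j) (at_right 0)"
    by cases (simp_all only: fcoef_20 fcoef_11 fcoef_02; intro tendsto_intros lam_lim)+
  show "((\<lambda>e. ge e i j) \<longlongrightarrow> g0 i j) (at_right 0)"
    unfolding gcoef_def by (intro tendsto_intros Psi0_perturbed_tendsto f)
qed

lemma second_order_endpoints_tendsto:
  "((\<lambda>e. we20 e 0) \<longlongrightarrow> w20 0) (at_right 0)" "((\<lambda>e. we20 e (-r)) \<longlongrightarrow> w20 (-r)) (at_right 0)"
  "((\<lambda>e. we11 e 0) \<longlongrightarrow> w11 0) (at_right 0)" "((\<lambda>e. we11 e (-r)) \<longlongrightarrow> w11 (-r)) (at_right 0)"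
  "((\<lambda>e. we02 e 0) \<longlongrightarrow> w02 0) (at_right 0)" "((\<lambda>e. we02 e (-r)) \<longlongrightarrow> w02 (-r)) (at_right 0)"
proof -
  note U = second_order_D[OF w_unpert]
  note T = exp_forced_sol_endpoints_tendsto[OF r_pos lam_lim Ae_lim Be_lim]
  note c = second_order_coeffs_tendsto[of 2 0] second_order_coeffs_tendsto[of 1 1]
    second_order_coeffs_tendsto[of 0 2]
  have ne: "l0 \<noteq> 2 * l0" "cnj l0 \<noteq> 2 * l0" "l0 \<noteq> l0 + cnj l0" "cnj l0 \<noteq> l0 + cnj l0"
    "l0 \<noteq> 2 * cnj l0" "cnj l0 \<noteq> 2 * cnj l0"
    using om_pos by (auto simp: complex_eq_iff)
  have ev20: "eventually (\<lambda>e.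
      exp_forced_sol r (2 * lam e) (ge e 2 0) (lam e) (cnj (ge e 0 2)) (cnj (lam e)) (we20 e)
      \<and> 2 * lam e * we20 e 0 + ge e 2 0 + cnj (ge e 0 2)
          = of_real (Ae e) * we20 e 0 + of_real (Be e) * we20 e (-r) + fe e 2 0) (at_right 0)"
    using w_pert by eventually_elim (intro conjI; erule second_order_D)
  have ev11: "eventually (\<lambda>e.
      exp_forced_sol r (lam e + cnj (lam e)) (ge e 1 1) (lam e) (cnj (ge e 1 1)) (cnj (lam e)) (we11 e)
      \<and> (lam e + cnj (lam e)) * we11 e 0 + ge e 1 1 + cnj (ge e 1 1)
          = of_real (Ae e) * we11 e 0 + of_real (Be e) * we11 e (-r) + fe e 1 1) (at_right 0)"
    using w_pert by eventually_elim (intro conjI; erule second_order_D)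
  have ev02: "eventually (\<lambda>e.
      exp_forced_sol r (2 * cnj (lam e)) (ge e 0 2) (lam e) (cnj (ge e 2 0)) (cnj (lam e)) (we02 e)
      \<and> 2 * cnj (lam e) * we02 e 0 + ge e 0 2 + cnj (ge e 2 0)
          = of_real (Ae e) * we02 e 0 + of_real (Be e) * we02 e (-r) + fe e 0 2) (at_right 0)"
    using w_pert by eventually_elim (intro conjI; erule second_order_D)
  have nu: "((\<lambda>e. 2 * lam e) \<longlongrightarrow> 2 * l0) (at_right 0)"
    "((\<lambda>e. lam e + cnj (lam e)) \<longlongrightarrow> l0 + cnj l0) (at_right 0)"
    "((\<lambda>e. 2 * cnj (lam e)) \<longlongrightarrow> 2 * cnj l0) (at_right 0)"
    by (intro tendsto_intros lam_lim)+
  show "((\<lambda>e. we20 e 0) \<longlongrightarrow> w20 0) (at_right 0)" "((\<lambda>e. we20 e (-r)) \<longlongrightarrow> w20 (-r)) (at_right 0)"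
    using T[OF nu(1) c(2) tendsto_cnj[OF c(6)] c(1) nonresonance(1) ne(1,2) ev20 U(1,2)] by simp_all
  show "((\<lambda>e. we11 e 0) \<longlongrightarrow> w11 0) (at_right 0)" "((\<lambda>e. we11 e (-r)) \<longlongrightarrow> w11 (-r)) (at_right 0)"
    using T[OF nu(2) c(4) tendsto_cnj[OF c(4)] c(3) nonresonance(2) ne(3,4) ev11 U(3,4)] by simp_all
  show "((\<lambda>e. we02 e 0) \<longlongrightarrow> w02 0) (at_right 0)" "((\<lambda>e. we02 e (-r)) \<longlongrightarrow> w02 (-r)) (at_right 0)"
    using T[OF nu(3) c(6) tendsto_cnj[OF c(2)] c(5) nonresonance(3) ne(5,6) ev02 U(5,6)] by simp_all
qed

end

context hopf_perturbation
begin

lemma third_order_coeffs_tendsto: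
  "((\<lambda>e. fe e 2 1) \<longlongrightarrow> f0 2 1) (at_right 0)" "((\<lambda>e. ge e 1 2) \<longlongrightarrow> g0 1 2) (at_right 0)"
proof -
  note w = second_order_endpoints_tendsto
  show "((\<lambda>e. fe e 2 1) \<longlongrightarrow> f0 2 1) (at_right 0)"
    unfolding fcoef_21 f21_expr_def by (intro tendsto_intros lam_lim w) simp_all
  have "((\<lambda>e. fe e 1 2) \<longlongrightarrow> f0 1 2) (at_right 0)"
    unfolding fcoef_12 f21_expr_def by (intro tendsto_intros lam_lim w) simp_all
  then show "((\<lambda>e. ge e 1 2) \<longlongrightarrow> g0 1 2) (at_right 0)"
    unfolding gcoef_def by (intro tendsto_intros Psi0_perturbed_tendsto)
qed

lemma kappa_perturbed_tendsto: "((\<lambda>e. kappa (lam e)) \<longlongrightarrow> l0) (at_right 0)"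
proof -
  have "((\<lambda>e. kappa (lam e)) \<longlongrightarrow> kappa l0) (at_right 0)"
    unfolding kappa_def by (intro tendsto_intros lam_lim)
  then show ?thesis by (simp add: kappa_def)
qed

lemma sing_coeff_reg_part_tendsto:
  "((\<lambda>e. sing_coeff (lam e) (kappa (lam e)) (fe e) (ge e)) \<longlongrightarrow> sing_coeff l0 (kappa l0) f0 g0) (at_right 0)"
  "((\<lambda>e. reg_part (lam e) (kappa (lam e)) (ge e) (we20 e 0) (we11 e 0) (we02 e 0))
      \<longlongrightarrow> reg_part l0 (kappa l0) g0 (w20 0) (w11 0) (w02 0)) (at_right 0)"
proof -
  have k: "kappa l0 = l0" by (simp add: kappa_def)
  have nz: "l0 - 2 * l0 \<noteq> 0" "l0 - (l0 + cnj l0) \<noteq> 0" "l0 - 2 * cnj l0 \<noteq> 0" "2 * l0 \<noteq> 0"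
    using om_pos by (simp_all add: complex_eq_iff)
  note c = second_order_coeffs_tendsto[of 2 0] second_order_coeffs_tendsto[of 1 1]
    second_order_coeffs_tendsto[of 0 2] third_order_coeffs_tendsto
  show "((\<lambda>e. sing_coeff (lam e) (kappa (lam e)) (fe e) (ge e)) \<longlongrightarrow> sing_coeff l0 (kappa l0) f0 g0) (at_right 0)"
    unfolding sing_coeff_def k by (intro tendsto_intros lam_lim kappa_perturbed_tendsto c nz) simp_all
  show "((\<lambda>e. reg_part (lam e) (kappa (lam e)) (ge e) (we20 e 0) (we11 e 0) (we02 e 0))
      \<longlongrightarrow> reg_part l0 (kappa l0) g0 (w20 0) (w11 0) (w02 0)) (at_right 0)"
    unfolding reg_part_def k
    by (intro tendsto_intros lam_lim kappa_perturbed_tendsto c nz second_order_endpoints_tendsto) simp_all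
qed

definition h0 :: complex where "h0 = 1 + of_real B * exp (- l0 * of_real r) * of_real r"

lemma h0_nonzero: "h0 \<noteq> 0"
  using imaginary_root_normalisation(2)[OF r_pos _ root_pos] om_pos by (simp add: h0_def)

lemma singular_factor_tendsto:
  "((\<lambda>e. 1 / Delta (Ae e) (Be e) r (lam e) - Psi0 (Ae e) r (lam e) / (lam e + cnj (lam e)))
      \<longlongrightarrow> of_real B * exp (- l0 * of_real r) * of_real r ^ 2 * of_real (1/2) / (h0 * h0)) (at_right 0)"
  and Delta_eventually_nonzero: "eventually (\<lambda>e. Delta (Ae e) (Be e) r (lam e) \<noteq> 0) (at_right 0)"
proof -
  define x where "x e = 2 * Re (lam e) * r" for e
  have "(x \<longlongrightarrow> 2 * Re l0 * r) (at_right 0)" unfolding x_def by (intro tendsto_intros lam_lim)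
  moreover have "eventually (\<lambda>e. x e > 0) (at_right 0)"
    using lam_root by eventually_elim (use r_pos in \<open>simp add: x_def\<close>)
  ultimately have "filterlim x (at_right 0) (at_right 0)"
    by (intro tendsto_imp_filterlim_at_right) simp_all
  then have phi1T: "((\<lambda>e. phi1 (x e)) \<longlongrightarrow> 1) (at_right 0)"
    and phi2T: "((\<lambda>e. phi2 (x e)) \<longlongrightarrow> 1/2) (at_right 0)"
    by (auto intro: filterlim_compose[OF phi1_tendsto] filterlim_compose[OF phi2_tendsto])
  define P where "P e = of_real (Be e) * exp (- lam e * of_real r) * of_real r" for e
  have "(P \<longlongrightarrow> of_real B * exp (- l0 * of_real r) * of_real r) (at_right 0)"
    unfolding P_def by (intro tendsto_intros Be_lim lam_lim)
  then have PT: "(P \<longlongrightarrow> h0 - 1) (at_right 0)" by (simp add: h0_def)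
  have hzT: "((\<lambda>e. 1 + P e) \<longlongrightarrow> h0) (at_right 0)"
    using tendsto_add[OF tendsto_const[of 1] PT] by simp
  have hqT: "((\<lambda>e. 1 + P e * of_real (phi1 (x e))) \<longlongrightarrow> h0) (at_right 0)"
    using tendsto_add[OF tendsto_const[of 1] tendsto_mult[OF PT tendsto_of_real[OF phi1T]]] by simp
  have ev: "eventually (\<lambda>e. 1 + P e \<noteq> 0 \<and> 1 + P e * of_real (phi1 (x e)) \<noteq> 0
      \<and> charfun (Ae e) (Be e) r (lam e) = 0 \<and> Re (lam e) > 0) (at_right 0)"
    using tendsto_imp_eventually_ne[OF hzT h0_nonzero] tendsto_imp_eventually_ne[OF hqT h0_nonzero] lam_root
    by eventually_elim simp
  then show "eventually (\<lambda>e. Delta (Ae e) (Be e) r (lam e) \<noteq> 0) (at_right 0)"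
    by eventually_elim (simp add: Delta_at_root[OF r_pos] P_def x_def mult.assoc)
  have lim: "of_real B * exp (- l0 * of_real r) * of_real r ^ 2 = (h0 - 1) * of_real r"
    by (simp add: h0_def power2_eq_square)
  have "((\<lambda>e. P e * of_real r * of_real (phi2 (x e)) / ((1 + P e) * (1 + P e * of_real (phi1 (x e)))))
      \<longlongrightarrow> of_real B * exp (- l0 * of_real r) * of_real r ^ 2 * of_real (1/2) / (h0 * h0)) (at_right 0)"
    unfolding lim using h0_nonzero
    by (intro tendsto_divide tendsto_mult PT tendsto_const tendsto_of_real phi2T hzT hqT) simp
  then show "((\<lambda>e. 1 / Delta (Ae e) (Be e) r (lam e) - Psi0 (Ae e) r (lam e) / (lam e + cnj (lam e)))
      \<longlongrightarrow> of_real B * exp (- l0 * of_real r) * of_real r ^ 2 * of_real (1/2) / (h0 * h0)) (at_right 0)"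
    by (rule Lim_transform_eventually)
       (use ev in \<open>eventually_elim, simp add: singular_factor_eq[OF r_pos] P_def x_def power2_eq_square mult_ac\<close>)
qed

lemma X21_eventually_eq:
  "eventually (\<lambda>e. X21 e = sing_coeff (lam e) (kappa (lam e)) (fe e) (ge e)
      * (1 / Delta (Ae e) (Be e) r (lam e) - Psi0 (Ae e) r (lam e) / (lam e + cnj (lam e)))
      - reg_part (lam e) (kappa (lam e)) (ge e) (we20 e 0) (we11 e 0) (we02 e 0)) (at_right 0)"
  using lam_root w_pert Delta_eventually_nonzero
proof eventually_elim
  case (elim e)
  then have "lam e + cnj (lam e) \<noteq> 0" "lam e \<noteq> 0" "2 * lam e \<noteq> cnj (lam e)"
    by (auto simp: complex_eq_iff)
  with elim show ?case by (intro X21_decomposition[OF r_pos]) auto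
qed

lemma X21_tendsto: "(X21 \<longlongrightarrow> W21 A B C r \<omega> w20 w11 w02) (at_right 0)"
proof -
  have c0: "charfun A B r 0 \<noteq> 0" using nonresonance(2) by simp
  have "((\<lambda>e. sing_coeff (lam e) (kappa (lam e)) (fe e) (ge e)
      * (1 / Delta (Ae e) (Be e) r (lam e) - Psi0 (Ae e) r (lam e) / (lam e + cnj (lam e)))
      - reg_part (lam e) (kappa (lam e)) (ge e) (we20 e 0) (we11 e 0) (we02 e 0))
      \<longlongrightarrow> W21 A B C r \<omega> w20 w11 w02) (at_right 0)"
    unfolding W21_eq[OF r_pos om_pos root_pos root_neg w_unpert nonresonance(1) c0, folded h0_def, symmetric]
    by (intro tendsto_intros sing_coeff_reg_part_tendsto singular_factor_tendsto)
  then show ?thesis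
    by (rule Lim_transform_eventually) (use X21_eventually_eq in \<open>auto elim: eventually_mono\<close>)
qed

end

theorem proposition4p3:
  fixes r A B \<omega> :: real
    and C :: "nat \<Rightarrow> nat \<Rightarrow> real"
    and Ae Be :: "real \<Rightarrow> real"
    and lam :: "real \<Rightarrow> complex"
    and w20 w11 w02 :: "real \<Rightarrow> complex"
    and we20 we11 we02 :: "real \<Rightarrow> real \<Rightarrow> complex"
  assumes r_pos: "r > 0" and om_pos: "\<omega> > 0"
    and root_pos: "charfun A B r (\<i> * of_real \<omega>) = 0"
    and root_neg: "charfun A B r (- \<i> * of_real \<omega>) = 0"
    and other_roots: "\<forall>z. charfun A B r z = 0 \<longrightarrow> z \<noteq> \<i> * of_real \<omega>
                          \<longrightarrow> z \<noteq> - \<i> * of_real \<omega> \<longrightarrow> Re z < 0"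
    and Ae_smooth: "\<forall>n. \<forall>e>0. (deriv ^^ n) Ae differentiable (at e)"
    and Be_smooth: "\<forall>n. \<forall>e>0. (deriv ^^ n) Be differentiable (at e)"
    and Ae_lim: "(Ae \<longlongrightarrow> A) (at_right 0)"
    and Be_lim: "(Be \<longlongrightarrow> B) (at_right 0)"
    and lam_root: "eventually (\<lambda>e. charfun (Ae e) (Be e) r (lam e) = 0
                               \<and> Re (lam e) > 0) (at_right 0)"
    and lam_other: "eventually (\<lambda>e. \<forall>z. charfun (Ae e) (Be e) r z = 0 \<longrightarrow> z \<noteq> lam e
                               \<longrightarrow> z \<noteq> cnj (lam e) \<longrightarrow> Re z < 0) (at_right 0)"
    and lam_lim: "(lam \<longlongrightarrow> \<i> * of_real \<omega>) (at_right 0)"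
    and w_unpert: "second_order A B r (\<i> * of_real \<omega>) C w20 w11 w02"
    and w_pert: "eventually (\<lambda>e. second_order (Ae e) (Be e) r (lam e) C
                                  (we20 e) (we11 e) (we02 e)) (at_right 0)"
  shows "eventually (\<lambda>e. (\<exists>!XY. sysP (Ae e) (Be e) C r (lam e) (we20 e) (we11 e) (we02 e)
                                  (fst XY) (snd XY))
           \<and> (\<forall>X Y. sysP (Ae e) (Be e) C r (lam e) (we20 e) (we11 e) (we02 e) X Y
                 \<longrightarrow> X = (of_real (Be e) * R1 (Ae e) C r (lam e) (we20 e) (we11 e) (we02 e)
                          - R2 (Ae e) C r (lam e) (we20 e) (we11 e) (we02 e))
                         / Delta (Ae e) (Be e) r (lam e))) (at_right 0)
       \<and> ((\<lambda>e. (of_real (Be e) * R1 (Ae e) C r (lam e) (we20 e) (we11 e) (we02 e)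
                  - R2 (Ae e) C r (lam e) (we20 e) (we11 e) (we02 e))
                 / Delta (Ae e) (Be e) r (lam e))
           \<longlongrightarrow> W21 A B C r \<omega> w20 w11 w02) (at_right 0)"
proof -
  interpret hopf_perturbation r A B \<omega> C Ae Be lam w20 w11 w02 we20 we11 we02
    by unfold_locales (fact r_pos om_pos root_pos root_neg other_roots Ae_lim Be_lim lam_root lam_lim
        w_unpert w_pert)+
  have "eventually (\<lambda>e. (\<exists>!XY. sysP (Ae e) (Be e) C r (lam e) (we20 e) (we11 e) (we02 e) (fst XY) (snd XY))
      \<and> (\<forall>X Y. sysP (Ae e) (Be e) C r (lam e) (we20 e) (we11 e) (we02 e) X Y \<longrightarrow> X = X21 e)) (at_right 0)"
    using Delta_eventually_nonzero by eventually_elim (rule sysP_unique_solution)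
  with X21_tendsto show ?thesis by simp
qed

end
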